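(* Let $F$ be an algebraically closed field with $\operatorname{char}F>3$, $R=F[[x,y]]$, and let $f\in R^2$ be an isolated complete intersection singularity with $j_3(f)$ contact equivalent to $(x^3,\,xy^2)$. Then $f$ is contact equivalent to $(x^3+y^r,\,xy^2)$ for some $r\ge 4$.
   Context: $\mathfrak m=\langle x,y\rangle$. ICIS: $f_1,f_2\in\mathfrak m$ a regular sequence with $\mathfrak m^k\subset\langle f_1,f_2\rangle+I_2(J(f))$ for some $k$. $j_3(f)$ is the image in $R^2/\mathfrak m^4R^2$. Contact equivalence: $g=U\cdot\phi(f)$ with $U\in GL(2,R)$, $\phi\in\operatorname{Aut}(R)$ (for jets, taken modulo $\mathfrak m^4R^2$). *)

theory Defs
  imports "HOL-Computational_Algebra.Computational_Algebra"
begin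

text \<open>The ring R = F[[x,y]] is realised as F[[x]][[y]], i.e. the type 'a fps fps.
  The outer variable is y, the inner one is x.\<close>

type_synonym 'a ps2 = "'a fps fps"

definition alg_closed_type :: "'a::field itself \<Rightarrow> bool" where
  "alg_closed_type _ \<longleftrightarrow> (\<forall>p::'a poly. degree p \<ge> 1 \<longrightarrow> (\<exists>z. poly p z = 0))"

definition coeff2 :: "'a::comm_ring_1 ps2 \<Rightarrow> nat \<Rightarrow> nat \<Rightarrow> 'a" where
  "coeff2 g i j = (g $ j) $ i"   (* coefficient of x^i y^j *)

definition varX :: "'a::comm_ring_1 ps2" where "varX = fps_const fps_X"
definition varY :: "'a::comm_ring_1 ps2" where "varY = fps_X"

definition ideal_span :: "'b::comm_ring_1 set \<Rightarrow> 'b set" where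
  "ideal_span S = {s. \<exists>T c. finite T \<and> T \<subseteq> S \<and> s = (\<Sum>t\<in>T. c t * t)}"

definition ideal_pow :: "'b::comm_ring_1 set \<Rightarrow> nat \<Rightarrow> 'b set" where
  "ideal_pow I k = ideal_span {prod_list xs | xs. length xs = k \<and> set xs \<subseteq> I}"

definition maxid :: "'a::comm_ring_1 ps2 set" where
  "maxid = ideal_span {varX, varY}"

definition dX :: "'a::comm_ring_1 ps2 \<Rightarrow> 'a ps2" where
  "dX g = Abs_fps (\<lambda>j. fps_deriv (g $ j))"
definition dY :: "'a::comm_ring_1 ps2 \<Rightarrow> 'a ps2" where
  "dY g = fps_deriv g"

text \<open>Substitution g(p,q) for p, q in the maximal ideal (only meaningful there:
  then p^i q^j has order at least i+j, so the sum below is the full coefficient).\<close>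
definition subst2 :: "'a::comm_ring_1 ps2 \<Rightarrow> 'a ps2 \<Rightarrow> 'a ps2 \<Rightarrow> 'a ps2" where
  "subst2 g p q = Abs_fps (\<lambda>b. Abs_fps (\<lambda>a.
      \<Sum>i\<le>a+b. \<Sum>j\<le>a+b-i. coeff2 g i j * coeff2 (p ^ i * q ^ j) a b))"

definition is_aut :: "'a::comm_ring_1 ps2 \<Rightarrow> 'a ps2 \<Rightarrow> bool" where
  "is_aut p q \<longleftrightarrow> p \<in> maxid \<and> q \<in> maxid \<and> bij (\<lambda>g. subst2 g p q)"

definition is_GL2 :: "'b::comm_ring_1 \<Rightarrow> 'b \<Rightarrow> 'b \<Rightarrow> 'b \<Rightarrow> bool" where
  "is_GL2 u11 u12 u21 u22 \<longleftrightarrow> (\<exists>v11 v12 v21 v22.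
      u11*v11 + u12*v21 = 1 \<and> u11*v12 + u12*v22 = 0 \<and>
      u21*v11 + u22*v21 = 0 \<and> u21*v12 + u22*v22 = 1 \<and>
      v11*u11 + v12*u21 = 1 \<and> v11*u12 + v12*u22 = 0 \<and>
      v21*u11 + v22*u21 = 0 \<and> v21*u12 + v22*u22 = 1)"

definition contact_act ::
  "'a::comm_ring_1 ps2 \<times> 'a ps2 \<times> 'a ps2 \<times> 'a ps2 \<Rightarrow> 'a ps2 \<times> 'a ps2 \<Rightarrow> 'a ps2 \<times> 'a ps2 \<Rightarrow> 'a ps2 \<times> 'a ps2" where
  "contact_act U phi f = (case U of (u11,u12,u21,u22) \<Rightarrow>
     (let g1 = subst2 (fst f) (fst phi) (snd phi); g2 = subst2 (snd f) (fst phi) (snd phi)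
      in (u11*g1 + u12*g2, u21*g1 + u22*g2)))"

definition contact_equiv :: "'a::comm_ring_1 ps2 \<times> 'a ps2 \<Rightarrow> 'a ps2 \<times> 'a ps2 \<Rightarrow> bool" where
  "contact_equiv f g \<longleftrightarrow> (\<exists>u11 u12 u21 u22 p q. is_GL2 u11 u12 u21 u22 \<and> is_aut p q \<and>
      g = contact_act (u11,u12,u21,u22) (p,q) f)"

definition jet3_contact_equiv :: "'a::comm_ring_1 ps2 \<times> 'a ps2 \<Rightarrow> 'a ps2 \<times> 'a ps2 \<Rightarrow> bool" where
  "jet3_contact_equiv f g \<longleftrightarrow> (\<exists>u11 u12 u21 u22 p q. is_GL2 u11 u12 u21 u22 \<and> is_aut p q \<and>
      (let h = contact_act (u11,u12,u21,u22) (p,q) f in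
        fst g - fst h \<in> ideal_pow maxid 4 \<and> snd g - snd h \<in> ideal_pow maxid 4))"

definition regular_seq2 :: "'a::comm_ring_1 ps2 \<Rightarrow> 'a ps2 \<Rightarrow> bool" where
  "regular_seq2 f1 f2 \<longleftrightarrow> f1 \<in> maxid \<and> f2 \<in> maxid \<and>
     (\<forall>g. g * f1 = 0 \<longrightarrow> g = 0) \<and>
     (\<forall>g. g * f2 \<in> ideal_span {f1} \<longrightarrow> g \<in> ideal_span {f1}) \<and>
     ideal_span {f1, f2} \<noteq> UNIV"

text \<open>Jacobian 2x2 minor (the only one), generating I_2(J(f)).\<close>
definition jac_minor :: "'a::comm_ring_1 ps2 \<times> 'a ps2 \<Rightarrow> 'a ps2" where
  "jac_minor f = dX (fst f) * dY (snd f) - dY (fst f) * dX (snd f)"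

definition is_ICIS :: "'a::comm_ring_1 ps2 \<times> 'a ps2 \<Rightarrow> bool" where
  "is_ICIS f \<longleftrightarrow> regular_seq2 (fst f) (snd f) \<and>
     (\<exists>k. ideal_pow maxid k \<subseteq> ideal_span {fst f, snd f, jac_minor f})"

end

theory Submission
  imports Defs
begin

text \<open>After a contact change, \<open>f = (x\<^sup>3, x y\<^sup>2)\<close> modulo \<open>m\<^sup>4\<close>. Working degree by degree,
  a shear \<open>x \<mapsto> x + s y\<^sup>d\<^sup>-\<^sup>2\<close> removes the \<open>y\<^sup>d\<close>-term of the second component, and a
  matrix in \<open>GL(2,R)\<close> pushes all other degree-\<open>d\<close> terms into higher order, so that
  \<open>f \<sim> (x\<^sup>3 + \<Sum> c\<^sub>d y\<^sup>d, x y\<^sup>2)\<close> modulo any power of \<open>m\<close>. The ideal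
  \<open>\<langle>f\<^sub>1, f\<^sub>2, I\<^sub>2(J f)\<rangle>\<close> is contact invariant and contains a power \<open>y\<^sup>k\<close> for an ICIS,
  whereas for \<open>(x\<^sup>3, x y\<^sup>2)\<close> modulo \<open>m\<^sup>k\<^sup>+\<^sup>2\<close> it has no \<open>y\<^sup>k\<close>-term; hence some
  \<open>c\<^sub>r \<noteq> 0\<close>, and for the least such \<open>r\<close> the first component is \<open>x\<^sup>3 + y\<^sup>r u\<close> with a unit
  \<open>u \<in> F[[y]]\<close>. Replacing \<open>x\<close> by \<open>x\<close> times a cube root of \<open>u\<close> modulo \<open>y\<^sup>2\<close> (here
  \<open>char F \<noteq> 3\<close> and algebraic closedness are used) and the finite determinacy
  \<open>m\<^sup>r\<^sup>+\<^sup>4 \<subseteq> m \<cdot> \<langle>x\<^sup>3 + y\<^sup>r, x y\<^sup>2\<rangle>\<close> give \<open>(x\<^sup>3 + y\<^sup>r, x y\<^sup>2)\<close>.\<close>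

section \<open>Coefficients\<close>

abbreviation const2 :: "'a::comm_ring_1 \<Rightarrow> 'a ps2" where
  "const2 c \<equiv> fps_const (fps_const c)"

lemma coeff2_add [simp]: "coeff2 (g + h) i j = coeff2 g i j + coeff2 h i j"
  and coeff2_diff [simp]: "coeff2 (g - h) i j = coeff2 g i j - coeff2 h i j"
  and coeff2_uminus [simp]: "coeff2 (- g) i j = - coeff2 g i j"
  and coeff2_zero [simp]: "coeff2 0 i j = 0"
  and coeff2_const2_mult [simp]: "coeff2 (const2 c * g) i j = c * coeff2 g i j"
  by (simp_all add: coeff2_def)

lemma coeff2_one: "coeff2 1 i j = (if i = 0 \<and> j = 0 then 1 else 0)"
  and coeff2_const2: "coeff2 (const2 c) i j = (if i = 0 \<and> j = 0 then c else 0)"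
  by (simp_all add: coeff2_def)

lemma coeff2_sum: "coeff2 (sum F A) i j = (\<Sum>a\<in>A. coeff2 (F a) i j)"
  by (induction A rule: infinite_finite_induct) (auto simp: coeff2_def)

lemma coeff2_mult:
  "coeff2 (g * h) a b = (\<Sum>j\<le>b. \<Sum>i\<le>a. coeff2 g i j * coeff2 h (a - i) (b - j))"
proof -
  have "((g * h) $ b) $ a = (\<Sum>j=0..b. (g $ j * h $ (b - j)) $ a)"
    by (simp add: fps_mult_nth fps_sum_nth)
  also have "\<dots> = (\<Sum>j\<le>b. \<Sum>i\<le>a. coeff2 g i j * coeff2 h (a - i) (b - j))"
    by (simp add: fps_mult_nth coeff2_def atLeast0AtMost)
  finally show ?thesis by (simp add: coeff2_def)
qed

lemma coeff2_mult_0_0: "coeff2 (g * h) 0 0 = coeff2 g 0 0 * coeff2 h 0 0"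
  and coeff2_mult_0_1: "coeff2 (g * h) 0 1 = coeff2 g 0 0 * coeff2 h 0 1 + coeff2 g 0 1 * coeff2 h 0 0"
  by (simp_all add: coeff2_mult)

lemma ps2_eqI: "(\<And>i j. coeff2 g i j = coeff2 h i j) \<Longrightarrow> g = h"
  unfolding coeff2_def by (intro fps_ext) simp

lemma coeff2_varX_power_mult:
  "coeff2 ((varX::'a::comm_ring_1 ps2) ^ i * g) a b = (if a < i then 0 else coeff2 g (a - i) b)"
  by (simp add: varX_def fps_const_power coeff2_def fps_X_power_mult_nth)

lemma coeff2_varY_power_mult:
  "coeff2 ((varY::'a::comm_ring_1 ps2) ^ j * g) a b = (if b < j then 0 else coeff2 g a (b - j))"
  by (simp add: varY_def coeff2_def fps_X_power_mult_nth)

lemma coeff2_varX_mult: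
  "coeff2 ((varX::'a::comm_ring_1 ps2) * g) a b = (if a = 0 then 0 else coeff2 g (a - 1) b)"
  using coeff2_varX_power_mult[of 1 g a b] by auto

lemma coeff2_varY_mult:
  "coeff2 ((varY::'a::comm_ring_1 ps2) * g) a b = (if b = 0 then 0 else coeff2 g a (b - 1))"
  using coeff2_varY_power_mult[of 1 g a b] by auto

lemma coeff2_varX_power_varY_power:
  "coeff2 ((varX::'a::comm_ring_1 ps2) ^ i * varY ^ j) a b = (if a = i \<and> b = j then 1 else 0)"
  by (auto simp: coeff2_varX_power_mult coeff2_varY_power_mult[where g=1, simplified] coeff2_one)

lemma coeff2_varX: "coeff2 (varX::'a::comm_ring_1 ps2) a b = (if a = 1 \<and> b = 0 then 1 else 0)"
  and coeff2_varY: "coeff2 (varY::'a::comm_ring_1 ps2) a b = (if a = 0 \<and> b = 1 then 1 else 0)"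
  using coeff2_varX_power_varY_power[of 1 0 a b] coeff2_varX_power_varY_power[of 0 1 a b] by simp_all

lemma coeff2_const2_mult_varY_power:
  "coeff2 (const2 c * varY ^ j :: 'a::comm_ring_1 ps2) a b = (if a = 0 \<and> b = j then c else 0)"
  using coeff2_varY_power_mult[of j "1::'a ps2" a b] by (auto simp: coeff2_one)

definition ps2_of :: "(nat \<Rightarrow> nat \<Rightarrow> 'a::comm_ring_1) \<Rightarrow> 'a ps2" where
  "ps2_of F = Abs_fps (\<lambda>j. Abs_fps (\<lambda>i. F i j))"

lemma coeff2_ps2_of [simp]: "coeff2 (ps2_of F) i j = F i j"
  by (simp add: ps2_of_def coeff2_def)

section \<open>The order filtration\<close>

text \<open>\<open>ord_ge n g\<close> says that \<open>g\<close> lies in the \<open>n\<close>-th power of the maximal ideal.\<close>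

definition ord_ge :: "nat \<Rightarrow> 'a::comm_ring_1 ps2 \<Rightarrow> bool" where
  "ord_ge n g \<longleftrightarrow> (\<forall>i j. i + j < n \<longrightarrow> coeff2 g i j = 0)"

lemma ord_ge_0 [simp]: "ord_ge 0 g"
  and ord_ge_zero [simp]: "ord_ge n 0"
  by (auto simp: ord_ge_def)

lemma ord_ge_add [intro]: "ord_ge n g \<Longrightarrow> ord_ge n h \<Longrightarrow> ord_ge n (g + h)"
  and ord_ge_diff [intro]: "ord_ge n g \<Longrightarrow> ord_ge n h \<Longrightarrow> ord_ge n (g - h)"
  and ord_ge_uminus [intro]: "ord_ge n g \<Longrightarrow> ord_ge n (- g)"
  and ord_ge_const2_mult: "ord_ge n g \<Longrightarrow> ord_ge n (const2 c * g)"
  by (auto simp: ord_ge_def)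

lemma ord_ge_mono: "ord_ge n g \<Longrightarrow> m \<le> n \<Longrightarrow> ord_ge m g"
  by (auto simp: ord_ge_def)

lemma ord_ge_mult:
  assumes "ord_ge n g" "ord_ge m h"
  shows "ord_ge (n + m) (g * h)"
  unfolding ord_ge_def
proof (intro allI impI)
  fix a b assume ab: "a + b < n + m"
  have "coeff2 g i j * coeff2 h (a - i) (b - j) = 0" if "i \<le> a" "j \<le> b" for i j
  proof (cases "i + j < n")
    case True
    thus ?thesis using assms(1) by (simp add: ord_ge_def)
  next
    case False
    hence "(a - i) + (b - j) < m" using ab that by linarith
    thus ?thesis using assms(2) by (simp add: ord_ge_def)
  qed
  thus "coeff2 (g * h) a b = 0" by (simp add: coeff2_mult)
qed

lemma ord_ge_mult_left: "ord_ge n h \<Longrightarrow> ord_ge n (g * h)"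
  using ord_ge_mult[of 0 g n h] by simp

lemma ord_ge_mult_right: "ord_ge n g \<Longrightarrow> ord_ge n (g * h)"
  using ord_ge_mult[of n g 0 h] by simp

lemma ord_ge_power: "ord_ge n g \<Longrightarrow> ord_ge (n * k) (g ^ k)"
  by (induction k) (auto simp: add.commute dest: ord_ge_mult)

lemma ord_ge_sum: "(\<And>a. a \<in> A \<Longrightarrow> ord_ge n (F a)) \<Longrightarrow> ord_ge n (sum F A)"
  by (induction A rule: infinite_finite_induct) auto

lemma ord_ge_mult_diff:
  assumes "ord_ge n (a - a')" "ord_ge n (b - b')"
  shows "ord_ge n (a * b - a' * b')"
proof -
  have "a * b - a' * b' = (a - a') * b + a' * (b - b')" by (simp add: algebra_simps)
  thus ?thesis using assms by (simp add: ord_ge_add ord_ge_mult_left ord_ge_mult_right)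
qed

lemma ord_ge_power_diff:
  assumes "ord_ge 1 a" "ord_ge (k + 1) (a - b)"
  shows "ord_ge (i + k) (a ^ i - b ^ i)"
proof (induction i)
  case (Suc i)
  have "ord_ge 1 (a - (a - b))" using ord_ge_diff[OF assms(1) ord_ge_mono[OF assms(2), of 1]] by simp
  hence b: "ord_ge 1 b" by simp
  have "a ^ Suc i - b ^ Suc i = a * (a ^ i - b ^ i) + (a - b) * b ^ i"
    by (simp add: algebra_simps)
  moreover have "ord_ge (Suc i + k) (a * (a ^ i - b ^ i))"
    using ord_ge_mult[OF assms(1) Suc] by simp
  moreover have "ord_ge (Suc i + k) ((a - b) * b ^ i)"
    using ord_ge_mult[OF assms(2) ord_ge_power[OF b, of i]] by (simp add: ac_simps)
  ultimately show ?case by (simp add: ord_ge_add)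
qed simp

lemma ord_ge_varX_power_mult: "ord_ge n g \<Longrightarrow> ord_ge (n + i) ((varX::'a::comm_ring_1 ps2) ^ i * g)"
  and ord_ge_varY_power_mult: "ord_ge n g \<Longrightarrow> ord_ge (n + i) ((varY::'a::comm_ring_1 ps2) ^ i * g)"
  by (auto simp: ord_ge_def coeff2_varX_power_mult coeff2_varY_power_mult)

lemma ord_ge_varX_power: "ord_ge i ((varX::'a::comm_ring_1 ps2) ^ i)"
  and ord_ge_varY_power: "ord_ge i ((varY::'a::comm_ring_1 ps2) ^ i)"
  using ord_ge_varX_power_mult[of 0 1 i] ord_ge_varY_power_mult[of 0 1 i] by simp_all

lemma ord_ge_varX: "ord_ge 1 (varX::'a::comm_ring_1 ps2)"
  and ord_ge_varY: "ord_ge 1 (varY::'a::comm_ring_1 ps2)"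
  using ord_ge_varX_power[of 1] ord_ge_varY_power[of 1] by simp_all

lemma ord_ge_minus_const2: "ord_ge 1 (g - const2 (coeff2 g 0 0))"
  by (simp add: ord_ge_def coeff2_const2)

lemma ord_ge_eqI: "(\<And>n. ord_ge (Suc n) (g - h)) \<Longrightarrow> g = h"
proof (rule ps2_eqI)
  fix i j
  assume "\<And>n. ord_ge (Suc n) (g - h)"
  from this[of "i + j"] show "coeff2 g i j = coeff2 h i j" by (simp add: ord_ge_def)
qed

section \<open>Substitution\<close>

definition monom2 :: "nat \<Rightarrow> nat \<Rightarrow> 'a::comm_ring_1 ps2" where
  "monom2 i j = varX ^ i * varY ^ j"

definition triangle :: "nat \<Rightarrow> (nat \<times> nat) set" where
  "triangle n = {(i, j). i + j \<le> n}"

lemma finite_triangle [simp]: "finite (triangle n)"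
  by (rule finite_subset[of _ "{..n} \<times> {..n}"]) (auto simp: triangle_def)

definition trunc2 :: "nat \<Rightarrow> 'a::comm_ring_1 ps2 \<Rightarrow> 'a ps2" where
  "trunc2 n g = (\<Sum>(i, j)\<in>triangle n. const2 (coeff2 g i j) * monom2 i j)"

lemma coeff2_monom2: "coeff2 (monom2 i j :: 'a::comm_ring_1 ps2) a b = (if a = i \<and> b = j then 1 else 0)"
  by (simp add: monom2_def coeff2_varX_power_varY_power)

lemma monom2_mult: "monom2 i j * monom2 k l = (monom2 (i + k) (j + l) :: 'a::comm_ring_1 ps2)"
  by (simp add: monom2_def power_add algebra_simps)

lemma coeff2_trunc2: "coeff2 (trunc2 n g) a b = (if a + b \<le> n then coeff2 g a b else 0)"
proof -
  have "coeff2 (trunc2 n g) a b = (\<Sum>(i, j)\<in>triangle n. coeff2 g i j * (if a = i \<and> b = j then 1 else 0))"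
    by (simp add: trunc2_def coeff2_sum case_prod_beta coeff2_monom2)
  also have "\<dots> = (\<Sum>u\<in>triangle n. if u = (a, b) then coeff2 g a b else 0)"
    by (intro sum.cong refl) fastforce
  also have "\<dots> = (if a + b \<le> n then coeff2 g a b else 0)"
    by (subst sum.delta[OF finite_triangle]) (auto simp: triangle_def)
  finally show ?thesis .
qed

lemma ord_ge_minus_trunc2: "ord_ge (Suc n) (g - trunc2 n g)"
  by (simp add: ord_ge_def coeff2_trunc2)

lemma coeff2_subst2: "coeff2 (subst2 g p q) a b =
    (\<Sum>i\<le>a+b. \<Sum>j\<le>a+b-i. coeff2 g i j * coeff2 (p ^ i * q ^ j) a b)"
  by (simp add: subst2_def coeff2_def)

lemma subst2_add: "subst2 (g + h) p q = subst2 g p q + subst2 h p q"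
  by (rule ps2_eqI) (simp add: coeff2_subst2 algebra_simps sum.distrib)

lemma subst2_const2_mult: "subst2 (const2 c * g) p q = const2 c * subst2 g p q"
  by (rule ps2_eqI) (simp add: coeff2_subst2 sum_distrib_left mult.assoc)

lemma subst2_uminus: "subst2 (- g) p q = - subst2 g p q"
  by (rule ps2_eqI) (simp add: coeff2_subst2 sum_negf)

lemma subst2_diff: "subst2 (g - h) p q = subst2 g p q - subst2 h p q"
  using subst2_add[of g "- h" p q] by (simp add: subst2_uminus)

lemma subst2_zero: "subst2 0 p q = 0"
  by (rule ps2_eqI) (simp add: coeff2_subst2)

lemma subst2_sum: "subst2 (sum F A) p q = (\<Sum>a\<in>A. subst2 (F a) p q)"
  by (induction A rule: infinite_finite_induct) (auto simp: subst2_zero subst2_add)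

lemma ord_ge_subst2: "ord_ge n g \<Longrightarrow> ord_ge n (subst2 g p q)"
  unfolding ord_ge_def by (auto simp: coeff2_subst2 intro!: sum.neutral)

lemma coeff2_subst2_0_0: "coeff2 (subst2 g p q) 0 0 = coeff2 g 0 0"
  by (simp add: coeff2_subst2 coeff2_one)

lemma coeff2_subst2_linear_part:
  assumes "ord_ge 1 p" "ord_ge 1 q" "coeff2 g 0 0 = 0"
  shows "coeff2 (subst2 g p q) 1 0 = coeff2 g 1 0 * coeff2 p 1 0 + coeff2 g 0 1 * coeff2 q 1 0"
    and "coeff2 (subst2 g p q) 0 1 = coeff2 g 1 0 * coeff2 p 0 1 + coeff2 g 0 1 * coeff2 q 0 1"
  using assms by (simp_all add: coeff2_subst2 atMost_Suc ord_ge_def)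

lemma ord_ge_power_mult_power:
  "ord_ge 1 p \<Longrightarrow> ord_ge 1 q \<Longrightarrow> ord_ge (i + j) (p ^ i * q ^ j)"
  using ord_ge_mult[OF ord_ge_power[of 1 p i] ord_ge_power[of 1 q j]] by simp

lemma subst2_monom2:
  assumes "ord_ge 1 p" "ord_ge 1 q"
  shows "subst2 (monom2 i j) p q = p ^ i * q ^ j"
proof (rule ps2_eqI)
  fix a b
  have "coeff2 (subst2 (monom2 i j) p q) a b =
      (\<Sum>i'\<le>a+b. \<Sum>j'\<le>a+b-i'. (if i' = i \<and> j' = j then coeff2 (p ^ i * q ^ j) a b else 0))"
    by (simp add: coeff2_subst2 coeff2_monom2 if_distrib cong: if_cong) (auto intro!: sum.cong)
  also have "\<dots> = (\<Sum>i'\<le>a+b. if i' = i then (if j \<le> a + b - i then coeff2 (p ^ i * q ^ j) a b else 0) else 0)"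
    by (intro sum.cong refl) (auto simp: sum.delta')
  also have "\<dots> = (if i + j \<le> a + b then coeff2 (p ^ i * q ^ j) a b else 0)"
    by (subst sum.delta) auto
  also have "\<dots> = coeff2 (p ^ i * q ^ j) a b"
    using ord_ge_power_mult_power[OF assms, of i j] by (auto simp: ord_ge_def)
  finally show "coeff2 (subst2 (monom2 i j) p q) a b = coeff2 (p ^ i * q ^ j) a b" .
qed

lemma subst2_trunc2:
  assumes "ord_ge 1 p" "ord_ge 1 q"
  shows "subst2 (trunc2 n g) p q = (\<Sum>(i, j)\<in>triangle n. const2 (coeff2 g i j) * (p ^ i * q ^ j))"
  by (simp add: trunc2_def subst2_sum case_prod_beta subst2_const2_mult subst2_monom2[OF assms])

lemma ord_ge_subst2_minus_subst2_trunc2: "ord_ge (Suc n) (subst2 g p q - subst2 (trunc2 n g) p q)"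
  using ord_ge_subst2[OF ord_ge_minus_trunc2[of n g]] by (simp add: subst2_diff)

lemma subst2_trunc2_mult:
  assumes "ord_ge 1 p" "ord_ge 1 q"
  shows "subst2 (trunc2 n g * trunc2 n h) p q = subst2 (trunc2 n g) p q * subst2 (trunc2 n h) p q"
proof -
  have e: "trunc2 n g * trunc2 n h = (\<Sum>u\<in>triangle n. \<Sum>v\<in>triangle n.
      const2 (coeff2 g (fst u) (snd u) * coeff2 h (fst v) (snd v)) * monom2 (fst u + fst v) (snd u + snd v))"
    unfolding trunc2_def sum_product
    by (intro sum.cong refl) (simp add: case_prod_beta monom2_mult[symmetric] algebra_simps)
  show ?thesis
    unfolding e subst2_trunc2[OF assms] sum_product
    by (simp only: subst2_sum subst2_const2_mult subst2_monom2[OF assms])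
       (intro sum.cong refl, simp add: case_prod_beta power_add algebra_simps)
qed

text \<open>Multiplicativity holds for polynomials by expansion; a general series agrees with its
  truncation modulo \<open>m\<^sup>n\<^sup>+\<^sup>1\<close>, and substitution respects this congruence.\<close>

lemma subst2_mult:
  assumes "ord_ge 1 p" "ord_ge 1 q"
  shows "subst2 (g * h) p q = subst2 g p q * subst2 h p q"
proof (rule ord_ge_eqI)
  fix n
  let ?G = "trunc2 n g" and ?H = "trunc2 n h"
  have "ord_ge (Suc n) (subst2 (g * h - ?G * ?H) p q)"
    by (intro ord_ge_subst2 ord_ge_mult_diff ord_ge_minus_trunc2)
  hence 1: "ord_ge (Suc n) (subst2 (g * h) p q - subst2 ?G p q * subst2 ?H p q)"
    by (simp add: subst2_diff subst2_trunc2_mult[OF assms])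
  have 2: "ord_ge (Suc n) (subst2 g p q * subst2 h p q - subst2 ?G p q * subst2 ?H p q)"
    by (intro ord_ge_mult_diff ord_ge_subst2_minus_subst2_trunc2)
  show "ord_ge (Suc n) (subst2 (g * h) p q - subst2 g p q * subst2 h p q)"
    using ord_ge_diff[OF 1 2] by simp
qed

context
  fixes p q :: "'a::comm_ring_1 ps2"
  assumes pq: "ord_ge 1 p" "ord_ge 1 q"
begin

lemma subst2_one: "subst2 1 p q = 1"
  using subst2_monom2[OF pq, of 0 0] by (simp add: monom2_def)

lemma subst2_const2: "subst2 (const2 c) p q = const2 c"
  using subst2_const2_mult[of c 1 p q] by (simp add: subst2_one)

lemma subst2_varX: "subst2 varX p q = p"
  and subst2_varY: "subst2 varY p q = q"
  using subst2_monom2[OF pq, of 1 0] subst2_monom2[OF pq, of 0 1] by (simp_all add: monom2_def)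

lemma subst2_power: "subst2 (g ^ n) p q = subst2 g p q ^ n"
  by (induction n) (simp_all add: subst2_one subst2_mult[OF pq])

lemma subst2_of_nat_mult: "subst2 (of_nat n * g) p q = of_nat n * subst2 g p q"
  using subst2_const2_mult[of "of_nat n" g p q] by (simp add: fps_of_nat)

lemma subst2_dvd_one: "g dvd 1 \<Longrightarrow> subst2 g p q dvd 1"
  by (metis dvd_def subst2_mult[OF pq] subst2_one)

end

lemma subst2_varX_varY: "subst2 g varX varY = g"
proof (rule ord_ge_eqI)
  fix n
  have "subst2 (trunc2 n g) varX varY = trunc2 n g"
    by (simp only: subst2_trunc2[OF ord_ge_varX ord_ge_varY]) (simp add: trunc2_def monom2_def)
  hence "subst2 g varX varY - g = (subst2 g varX varY - subst2 (trunc2 n g) varX varY) - (g - trunc2 n g)"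
    by simp
  thus "ord_ge (Suc n) (subst2 g varX varY - g)"
    using ord_ge_diff[OF ord_ge_subst2_minus_subst2_trunc2[of n g varX varY] ord_ge_minus_trunc2[of n g]]
    by simp
qed

lemma subst2_subst2:
  assumes pq: "ord_ge 1 p" "ord_ge 1 q" and PQ: "ord_ge 1 P" "ord_ge 1 Q"
  shows "subst2 (subst2 g p q) P Q = subst2 g (subst2 p P Q) (subst2 q P Q)"
proof (rule ord_ge_eqI)
  fix n
  have pq': "ord_ge 1 (subst2 p P Q)" "ord_ge 1 (subst2 q P Q)"
    using pq by (simp_all add: ord_ge_subst2)
  have e: "subst2 (subst2 (trunc2 n g) p q) P Q = subst2 (trunc2 n g) (subst2 p P Q) (subst2 q P Q)"
    unfolding subst2_trunc2[OF pq] subst2_trunc2[OF pq'] subst2_sum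
    by (intro sum.cong refl)
       (simp only: case_prod_beta subst2_const2[OF PQ] subst2_mult[OF PQ] subst2_power[OF PQ])
  have 1: "ord_ge (Suc n) (subst2 (subst2 g p q) P Q - subst2 (subst2 (trunc2 n g) p q) P Q)"
    using ord_ge_subst2[OF ord_ge_subst2_minus_subst2_trunc2[of n g p q]] by (simp add: subst2_diff)
  show "ord_ge (Suc n) (subst2 (subst2 g p q) P Q - subst2 g (subst2 p P Q) (subst2 q P Q))"
    using ord_ge_diff[OF 1 ord_ge_subst2_minus_subst2_trunc2[of n g "subst2 p P Q" "subst2 q P Q"]]
    by (simp add: e)
qed

lemma ord_ge_subst2_minus:
  assumes p: "ord_ge (k + 1) (p - varX)" and q: "ord_ge (k + 1) (q - varY)" and g: "ord_ge n g"
  shows "ord_ge (n + k) (subst2 g p q - g)"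
proof -
  have lp: "ord_ge 1 p" using ord_ge_add[OF ord_ge_mono[OF p] ord_ge_varX] by simp
  have lq: "ord_ge 1 q" using ord_ge_add[OF ord_ge_mono[OF q] ord_ge_varY] by simp
  let ?M = "n + k"
  have monom_diff: "ord_ge ?M (p ^ i * q ^ j - monom2 i j)" if "n \<le> i + j" for i j
  proof -
    have "ord_ge ?M (p ^ i * (q ^ j - varY ^ j))"
      by (rule ord_ge_mono[OF ord_ge_mult[OF ord_ge_power[OF lp, of i] ord_ge_power_diff[OF lq q, of j]]])
         (use that in simp)
    moreover have "ord_ge ?M ((p ^ i - varX ^ i) * varY ^ j)"
      by (rule ord_ge_mono[OF ord_ge_mult[OF ord_ge_power_diff[OF lp p, of i] ord_ge_varY_power[of j]]])
         (use that in simp)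
    moreover have "p ^ i * q ^ j - monom2 i j = p ^ i * (q ^ j - varY ^ j) + (p ^ i - varX ^ i) * varY ^ j"
      by (simp add: monom2_def algebra_simps)
    ultimately show ?thesis by (simp add: ord_ge_add)
  qed
  have "subst2 (trunc2 ?M g) p q - trunc2 ?M g =
      (\<Sum>(i, j)\<in>triangle ?M. const2 (coeff2 g i j) * (p ^ i * q ^ j - monom2 i j))"
    unfolding subst2_trunc2[OF lp lq] unfolding trunc2_def sum_subtractf[symmetric]
    by (intro sum.cong refl) (simp only: case_prod_beta right_diff_distrib)
  moreover have "ord_ge ?M (const2 (coeff2 g i j) * (p ^ i * q ^ j - monom2 i j))" for i j
    using g monom_diff[of i j] by (cases "i + j < n") (auto simp: ord_ge_def intro: ord_ge_const2_mult)
  ultimately have t: "ord_ge ?M (subst2 (trunc2 ?M g) p q - trunc2 ?M g)"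
    by (simp only:) (rule ord_ge_sum, auto)
  have 1: "ord_ge ?M (subst2 g p q - subst2 (trunc2 ?M g) p q)"
    by (rule ord_ge_mono[OF ord_ge_subst2_minus_subst2_trunc2]) simp
  have 2: "ord_ge ?M (g - trunc2 ?M g)"
    by (rule ord_ge_mono[OF ord_ge_minus_trunc2]) simp
  have "subst2 g p q - g = (subst2 g p q - subst2 (trunc2 ?M g) p q) - (g - trunc2 ?M g)
      + (subst2 (trunc2 ?M g) p q - trunc2 ?M g)" by simp
  thus ?thesis using ord_ge_add[OF ord_ge_diff[OF 1 2] t] by simp
qed

section \<open>Partial derivatives and the chain rule\<close>

lemma coeff2_dX: "coeff2 (dX g) i j = of_nat (i + 1) * coeff2 g (i + 1) j"
  by (simp add: coeff2_def dX_def)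

lemma coeff2_dY: "coeff2 (dY g) i j = of_nat (j + 1) * coeff2 g i (j + 1)"
proof -
  have "dY g $ j = of_nat (j + 1) * g $ (j + 1)" by (simp add: dY_def)
  thus ?thesis by (simp add: coeff2_def fps_of_nat[symmetric])
qed

lemma dX_add: "dX (g + h) = dX g + dX h"
  and dX_diff: "dX (g - h) = dX g - dX h"
  and dX_zero: "dX 0 = 0"
  by (rule fps_ext; simp add: dX_def fps_deriv_sub)+

lemma dX_mult: "dX (g * h) = dX g * h + g * dX h"
  by (rule fps_ext) (simp add: dX_def fps_mult_nth fps_deriv_sum sum.distrib)

lemma dY_add: "dY (g + h) = dY g + dY h"
  and dY_diff: "dY (g - h) = dY g - dY h"
  and dY_zero: "dY 0 = 0"
  and dY_mult: "dY (g * h) = dY g * h + g * dY h"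
  by (simp_all add: dY_def fps_deriv_sub)

lemma dX_const2: "dX (const2 c) = 0"
  and dY_const2: "dY (const2 c) = 0"
  by (rule ps2_eqI; simp add: coeff2_dX coeff2_dY coeff2_const2)+

lemma dX_const2_mult: "dX (const2 c * g) = const2 c * dX g"
  and dY_const2_mult: "dY (const2 c * g) = const2 c * dY g"
  by (simp_all add: dX_mult dY_mult dX_const2 dY_const2)

lemma dX_varX: "dX varX = 1"
  and dX_varY: "dX varY = 0"
  by (rule ps2_eqI; simp only: coeff2_dX coeff2_one coeff2_zero coeff2_varX coeff2_varY; simp)+

lemma dY_varX: "dY varX = 0"
  and dY_varY: "dY varY = 1"
  by (simp_all add: dY_def varX_def varY_def)

lemma dX_power: "dX (g ^ n) = of_nat n * g ^ (n - 1) * dX g"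
proof (induction n)
  case (Suc n) thus ?case by (cases n) (simp_all add: dX_mult algebra_simps)
qed (use dX_const2[of 1] in simp)

lemma dY_power: "dY (g ^ n) = of_nat n * g ^ (n - 1) * dY g"
proof (induction n)
  case (Suc n) thus ?case by (cases n) (simp_all add: dY_mult algebra_simps)
qed (use dY_const2[of 1] in simp)

lemma ord_ge_dX: "ord_ge (Suc n) g \<Longrightarrow> ord_ge n (dX g)"
  and ord_ge_dY: "ord_ge (Suc n) g \<Longrightarrow> ord_ge n (dY g)"
  by (simp_all add: ord_ge_def coeff2_dX coeff2_dY)

definition chain_rule_at :: "'a::comm_ring_1 ps2 \<Rightarrow> 'a ps2 \<Rightarrow> 'a ps2 \<Rightarrow> bool" where
  "chain_rule_at p q g \<longleftrightarrow>
     dX (subst2 g p q) = subst2 (dX g) p q * dX p + subst2 (dY g) p q * dX q \<and>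
     dY (subst2 g p q) = subst2 (dX g) p q * dY p + subst2 (dY g) p q * dY q"

lemma chain_rule_at_monom2:
  assumes "ord_ge 1 p" "ord_ge 1 q"
  shows "chain_rule_at p q (monom2 i j)"
proof -
  have dx: "dX (monom2 i j) = of_nat i * monom2 (i - 1) j"
    and dy: "dY (monom2 i j) = of_nat j * monom2 i (j - 1)"
    by (simp_all add: monom2_def dX_mult dY_mult dX_power dY_power dX_varX dX_varY dY_varX dY_varY
        dX_zero power_0_left algebra_simps)
  show ?thesis
    unfolding chain_rule_at_def dx dy subst2_of_nat_mult[OF assms] subst2_monom2[OF assms]
    by (simp add: dX_mult dY_mult dX_power dY_power algebra_simps)
qed

lemma chain_rule_trunc2:
  assumes "ord_ge 1 p" "ord_ge 1 q"
  shows "dX (subst2 (trunc2 n g) p q) =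
      subst2 (dX (trunc2 n g)) p q * dX p + subst2 (dY (trunc2 n g)) p q * dX q"
    and "dY (subst2 (trunc2 n g) p q) =
      subst2 (dX (trunc2 n g)) p q * dY p + subst2 (dY (trunc2 n g)) p q * dY q"
proof -
  have lin: "chain_rule_at p q (const2 c * g + h)" if "chain_rule_at p q g" "chain_rule_at p q h" for c g h
    using that
    unfolding chain_rule_at_def subst2_add dX_add dY_add subst2_const2_mult dX_const2_mult dY_const2_mult
    by (simp add: distrib_left distrib_right mult.assoc)
  have "chain_rule_at p q (\<Sum>u\<in>A. const2 (coeff2 g (fst u) (snd u)) * monom2 (fst u) (snd u))" for A
  proof (induction A rule: infinite_finite_induct)
    case (insert u A)
    thus ?case using lin chain_rule_at_monom2[OF assms] by simp
  qed (simp_all add: chain_rule_at_def subst2_zero dX_zero dY_zero)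
  thus "dX (subst2 (trunc2 n g) p q) =
      subst2 (dX (trunc2 n g)) p q * dX p + subst2 (dY (trunc2 n g)) p q * dX q"
    and "dY (subst2 (trunc2 n g) p q) =
      subst2 (dX (trunc2 n g)) p q * dY p + subst2 (dY (trunc2 n g)) p q * dY q"
    by (simp_all add: trunc2_def case_prod_beta chain_rule_at_def)
qed

text \<open>The chain rule for a series follows from that of its truncations, since both sides
  depend only on \<open>g\<close> modulo \<open>m\<^sup>n\<^sup>+\<^sup>1\<close> up to an error in \<open>m\<^sup>n\<close>.\<close>

lemma chain_rule_from_trunc2:
  fixes D :: "'a::comm_ring_1 ps2 \<Rightarrow> 'a ps2"
  assumes D_diff: "\<And>a b. D (a - b) = D a - D b"
    and ord_ge_D: "\<And>n a. ord_ge (Suc n) a \<Longrightarrow> ord_ge n (D a)"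
    and trunc: "\<And>n. D (subst2 (trunc2 n g) p q) =
                   subst2 (dX (trunc2 n g)) p q * dp + subst2 (dY (trunc2 n g)) p q * dq"
  shows "D (subst2 g p q) = subst2 (dX g) p q * dp + subst2 (dY g) p q * dq"
proof (rule ord_ge_eqI)
  fix n
  let ?T = "trunc2 (Suc n) g"
  have gT: "ord_ge (Suc (Suc n)) (g - ?T)" by (rule ord_ge_minus_trunc2)
  have 1: "ord_ge (Suc n) (D (subst2 g p q) - D (subst2 ?T p q))"
    unfolding D_diff[symmetric] subst2_diff[symmetric] by (rule ord_ge_D[OF ord_ge_subst2[OF gT]])
  have 2: "ord_ge (Suc n) (subst2 (dX g) p q - subst2 (dX ?T) p q)"
    unfolding subst2_diff[symmetric] dX_diff[symmetric] by (rule ord_ge_subst2[OF ord_ge_dX[OF gT]])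
  have 3: "ord_ge (Suc n) (subst2 (dY g) p q - subst2 (dY ?T) p q)"
    unfolding subst2_diff[symmetric] dY_diff[symmetric] by (rule ord_ge_subst2[OF ord_ge_dY[OF gT]])
  have e: "D (subst2 g p q) - (subst2 (dX g) p q * dp + subst2 (dY g) p q * dq) =
      (D (subst2 g p q) - D (subst2 ?T p q)) - (subst2 (dX g) p q - subst2 (dX ?T) p q) * dp
        - (subst2 (dY g) p q - subst2 (dY ?T) p q) * dq"
    unfolding trunc by (simp add: algebra_simps)
  show "ord_ge (Suc n) (D (subst2 g p q) - (subst2 (dX g) p q * dp + subst2 (dY g) p q * dq))"
    unfolding e by (intro ord_ge_diff 1 ord_ge_mult_right 2 3)
qed

lemma dX_subst2:
  assumes "ord_ge 1 p" "ord_ge 1 q"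
  shows "dX (subst2 g p q) = subst2 (dX g) p q * dX p + subst2 (dY g) p q * dX q"
  by (rule chain_rule_from_trunc2[where D = dX, OF dX_diff ord_ge_dX chain_rule_trunc2(1)[OF assms]])

lemma dY_subst2:
  assumes "ord_ge 1 p" "ord_ge 1 q"
  shows "dY (subst2 g p q) = subst2 (dX g) p q * dY p + subst2 (dY g) p q * dY q"
  by (rule chain_rule_from_trunc2[where D = dY, OF dY_diff ord_ge_dY chain_rule_trunc2(2)[OF assms]])

section \<open>Ideals, units and the contact group\<close>

lemma ps2_dvd_one:
  fixes z :: "'a::field ps2"
  assumes "coeff2 z 0 0 \<noteq> 0"
  shows "z dvd 1"
proof -
  have "z $ 0 * fps_right_inverse (z $ 0) (inverse (z $ 0 $ 0)) = 1"
    using assms by (intro fps_right_inverse) (simp add: coeff2_def)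
  hence "z * fps_right_inverse z (fps_right_inverse (z $ 0) (inverse (z $ 0 $ 0))) = 1"
    by (rule fps_right_inverse)
  thus ?thesis by (metis dvdI)
qed

lemma ideal_span_mem: "x \<in> S \<Longrightarrow> x \<in> ideal_span S"
  unfolding ideal_span_def by (intro CollectI exI[of _ "{x}"] exI[of _ "\<lambda>_. 1"]) simp

lemma ideal_span_add:
  assumes "a \<in> ideal_span S" "b \<in> ideal_span S"
  shows "a + b \<in> ideal_span S"
proof -
  obtain T c where T: "finite T" "T \<subseteq> S" "a = (\<Sum>t\<in>T. c t * t)"
    using assms(1) by (auto simp: ideal_span_def)
  obtain T' c' where T': "finite T'" "T' \<subseteq> S" "b = (\<Sum>t\<in>T'. c' t * t)"
    using assms(2) by (auto simp: ideal_span_def)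
  let ?d = "\<lambda>t. (if t \<in> T then c t else 0) + (if t \<in> T' then c' t else 0)"
  have "(\<Sum>t\<in>T \<union> T'. ?d t * t) =
      (\<Sum>t\<in>T \<union> T'. (if t \<in> T then c t * t else 0) + (if t \<in> T' then c' t * t else 0))"
    by (rule sum.cong) (auto simp: distrib_right)
  also have "\<dots> = (\<Sum>t\<in>(T \<union> T') \<inter> T. c t * t) + (\<Sum>t\<in>(T \<union> T') \<inter> T'. c' t * t)"
    unfolding sum.distrib by (subst (1 2) sum.inter_restrict) (use T T' in auto)
  also have "\<dots> = a + b"
    using T T' by (simp add: Int_absorb1)
  finally show ?thesis unfolding ideal_span_def using T T'
    by (intro CollectI exI[of _ "T \<union> T'"] exI[of _ ?d]) auto
qed

lemma ideal_span_mult: "a \<in> ideal_span S \<Longrightarrow> r * a \<in> ideal_span S"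
proof -
  assume "a \<in> ideal_span S"
  then obtain T c where T: "finite T" "T \<subseteq> S" "a = (\<Sum>t\<in>T. c t * t)"
    by (auto simp: ideal_span_def)
  have "r * a = (\<Sum>t\<in>T. (r * c t) * t)" using T(3) by (simp add: sum_distrib_left mult.assoc)
  thus ?thesis using T unfolding ideal_span_def by (intro CollectI exI[of _ T]) auto
qed

lemma ideal_span_diff: "a \<in> ideal_span S \<Longrightarrow> b \<in> ideal_span S \<Longrightarrow> a - b \<in> ideal_span S"
  using ideal_span_add[of a S "(- 1) * b"] ideal_span_mult[of b S "- 1"] by simp

lemma ideal_span_insert3E:
  fixes a b c :: "'b::comm_ring_1"
  assumes "s \<in> ideal_span {a, b, c}"
  obtains u v w where "s = u * a + v * b + w * c"
proof -
  have "\<exists>u v w. (\<Sum>t\<in>T. k t * t) = u * a + v * b + w * c" if "finite T" "T \<subseteq> {a, b, c}" for T k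
    using that
  proof (induction T rule: finite_induct)
    case (insert x T)
    then obtain u v w where e: "(\<Sum>t\<in>T. k t * t) = u * a + v * b + w * c" by auto
    from insert have "x = a \<or> x = b \<or> x = c" by auto
    thus ?case
    proof (elim disjE)
      assume "x = a" thus ?thesis using insert e
        by (intro exI[of _ "u + k x"] exI[of _ v] exI[of _ w]) (simp add: algebra_simps)
    next
      assume "x = b" thus ?thesis using insert e
        by (intro exI[of _ u] exI[of _ "v + k x"] exI[of _ w]) (simp add: algebra_simps)
    next
      assume "x = c" thus ?thesis using insert e
        by (intro exI[of _ u] exI[of _ v] exI[of _ "w + k x"]) (simp add: algebra_simps)
    qed
  qed (intro exI[of _ 0], simp)
  thus ?thesis using assms that unfolding ideal_span_def by blast
qed

lemma ord_ge_ideal_span: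
  assumes "s \<in> ideal_span S" "\<And>t. t \<in> S \<Longrightarrow> ord_ge n t"
  shows "ord_ge n s"
proof -
  obtain T c where T: "finite T" "T \<subseteq> S" "s = (\<Sum>t\<in>T. c t * t)"
    using assms(1) by (auto simp: ideal_span_def)
  show ?thesis unfolding T(3) using T(2) assms(2) by (intro ord_ge_sum ord_ge_mult_left) blast
qed

lemma maxid_iff_ord_ge: "h \<in> maxid \<longleftrightarrow> ord_ge 1 h"
proof
  assume "h \<in> maxid"
  thus "ord_ge 1 h"
    unfolding maxid_def by (rule ord_ge_ideal_span) (use ord_ge_varX ord_ge_varY in blast)
next
  assume h: "ord_ge 1 h"
  let ?a = "fps_const (fps_shift 1 (h $ 0))" and ?b = "fps_shift 1 h"
  have "h = varX * ?a + varY * ?b"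
  proof (rule ps2_eqI)
    fix i j
    have "coeff2 h 0 0 = 0" using h by (simp add: ord_ge_def)
    thus "coeff2 h i j = coeff2 (varX * ?a + varY * ?b) i j"
      unfolding coeff2_add coeff2_varX_mult coeff2_varY_mult
      by (cases i; cases j) (simp_all add: coeff2_def)
  qed
  moreover have "varX * ?a \<in> maxid" "varY * ?b \<in> maxid"
    unfolding maxid_def by (subst mult.commute, rule ideal_span_mult, rule ideal_span_mem, simp)+
  ultimately show "h \<in> maxid" by (metis ideal_span_add maxid_def)
qed

lemma ord_ge_ideal_pow_maxid: "g \<in> ideal_pow maxid n \<Longrightarrow> ord_ge n g"
proof -
  have "ord_ge (length xs) (prod_list xs)" if "set xs \<subseteq> maxid" for xs :: "'a ps2 list"
    using that
  proof (induction xs)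
    case (Cons x xs)
    thus ?case using ord_ge_mult[of 1 x _ "prod_list xs"] by (simp add: maxid_iff_ord_ge)
  qed simp
  thus "g \<in> ideal_pow maxid n \<Longrightarrow> ord_ge n g"
    unfolding ideal_pow_def by (elim ord_ge_ideal_span) blast
qed

lemma power_in_ideal_pow: "h \<in> S \<Longrightarrow> h ^ n \<in> ideal_pow S n"
  unfolding ideal_pow_def by (intro ideal_span_mem CollectI exI[of _ "replicate n h"]) auto

lemma is_GL2_iff_det_dvd_one:
  "is_GL2 u11 u12 u21 u22 \<longleftrightarrow> (u11 * u22 - u12 * u21) dvd 1"
proof
  assume "is_GL2 u11 u12 u21 u22"
  then obtain v11 v12 v21 v22 where v:
      "u11*v11 + u12*v21 = 1" "u11*v12 + u12*v22 = 0"
      "u21*v11 + u22*v21 = 0" "u21*v12 + u22*v22 = 1" unfolding is_GL2_def by blast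
  have "(u11 * u22 - u12 * u21) * (v11 * v22 - v12 * v21) =
      (u11*v11 + u12*v21) * (u21*v12 + u22*v22) - (u11*v12 + u12*v22) * (u21*v11 + u22*v21)"
    by (simp add: algebra_simps)
  also have "\<dots> = 1" by (simp add: v)
  finally show "(u11 * u22 - u12 * u21) dvd 1" by (metis dvdI)
next
  assume "(u11 * u22 - u12 * u21) dvd 1"
  then obtain e where "1 = (u11 * u22 - u12 * u21) * e" by (rule dvdE)
  hence "u11 * u22 * e - u12 * u21 * e = 1" by (simp add: algebra_simps)
  thus "is_GL2 u11 u12 u21 u22" unfolding is_GL2_def
    by (intro exI[of _ "u22 * e"] exI[of _ "- u12 * e"] exI[of _ "- u21 * e"] exI[of _ "u11 * e"])
       (simp add: algebra_simps)
qed

lemma contact_act_eq [simp]: "contact_act (u11, u12, u21, u22) (p, q) f =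
    (u11 * subst2 (fst f) p q + u12 * subst2 (snd f) p q,
     u21 * subst2 (fst f) p q + u22 * subst2 (snd f) p q)"
  by (simp add: contact_act_def Let_def)

lemma is_aut_ord_ge: "is_aut p q \<Longrightarrow> ord_ge 1 p \<and> ord_ge 1 q"
  by (simp add: is_aut_def maxid_iff_ord_ge)

lemma is_aut_varX_varY: "is_aut varX varY"
  using ord_ge_varX ord_ge_varY
  by (simp add: is_aut_def maxid_iff_ord_ge subst2_varX_varY bij_id[unfolded id_def])

lemma is_aut_subst2:
  assumes "is_aut p q" "is_aut P Q"
  shows "is_aut (subst2 p P Q) (subst2 q P Q)"
proof -
  have l: "ord_ge 1 p" "ord_ge 1 q" "ord_ge 1 P" "ord_ge 1 Q" using assms is_aut_ord_ge by blast+
  have "(\<lambda>g. subst2 g (subst2 p P Q) (subst2 q P Q)) = (\<lambda>g. subst2 g P Q) \<circ> (\<lambda>g. subst2 g p q)"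
    by (rule ext) (simp add: subst2_subst2[OF l])
  moreover have "bij (\<lambda>g. subst2 g P Q)" "bij (\<lambda>g. subst2 g p q)"
    using assms by (simp_all add: is_aut_def)
  ultimately show ?thesis using l by (simp add: is_aut_def maxid_iff_ord_ge ord_ge_subst2 bij_comp)
qed

lemma is_autI:
  assumes l: "ord_ge 1 p" "ord_ge 1 q" "ord_ge 1 P" "ord_ge 1 Q"
    and e: "subst2 p P Q = varX" "subst2 q P Q = varY" "subst2 P p q = varX" "subst2 Q p q = varY"
  shows "is_aut p q"
proof -
  have "bij (\<lambda>g. subst2 g p q)"
    by (rule bij_betw_byWitness[where f'="\<lambda>g. subst2 g P Q"])
       (simp_all add: subst2_subst2[OF l] subst2_subst2[OF l(3,4,1,2)] e subst2_varX_varY)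
  thus ?thesis using l by (simp add: is_aut_def maxid_iff_ord_ge)
qed

lemma contact_equivI:
  "is_GL2 u11 u12 u21 u22 \<Longrightarrow> is_aut p q \<Longrightarrow> contact_equiv f (contact_act (u11, u12, u21, u22) (p, q) f)"
  unfolding contact_equiv_def by blast

lemma contact_equiv_contact_act_contact_act:
  assumes U: "is_GL2 u11 u12 u21 u22" and V: "is_GL2 v11 v12 v21 v22"
    and pq: "is_aut p q" and PQ: "is_aut P Q"
  shows "contact_equiv f (contact_act (v11, v12, v21, v22) (P, Q) (contact_act (u11, u12, u21, u22) (p, q) f))"
proof -
  have l: "ord_ge 1 p" "ord_ge 1 q" "ord_ge 1 P" "ord_ge 1 Q" using pq PQ is_aut_ord_ge by blast+
  let ?s = "\<lambda>g. subst2 g P Q"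
  let ?w11 = "v11 * ?s u11 + v12 * ?s u21" and ?w12 = "v11 * ?s u12 + v12 * ?s u22"
  let ?w21 = "v21 * ?s u11 + v22 * ?s u21" and ?w22 = "v21 * ?s u12 + v22 * ?s u22"
  have "?w11 * ?w22 - ?w12 * ?w21 = (v11 * v22 - v12 * v21) * ?s (u11 * u22 - u12 * u21)"
    by (simp add: subst2_mult[OF l(3,4)] subst2_diff algebra_simps)
  hence "is_GL2 ?w11 ?w12 ?w21 ?w22"
    using U V l by (simp add: is_GL2_iff_det_dvd_one subst2_dvd_one mult_dvd_mono[of _ 1 _ 1, simplified])
  moreover have "contact_act (v11, v12, v21, v22) (P, Q) (contact_act (u11, u12, u21, u22) (p, q) f)
      = contact_act (?w11, ?w12, ?w21, ?w22) (subst2 p P Q, subst2 q P Q) f"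
    by (simp add: subst2_add subst2_mult[OF l(3,4)] subst2_subst2[OF l] algebra_simps)
  ultimately show ?thesis using contact_equivI is_aut_subst2[OF pq PQ] by metis
qed

lemma contact_equiv_trans:
  assumes "contact_equiv f g" "contact_equiv g h"
  shows "contact_equiv f h"
proof -
  obtain u11 u12 u21 u22 p q where U: "is_GL2 u11 u12 u21 u22" "is_aut p q"
    and g: "g = contact_act (u11, u12, u21, u22) (p, q) f"
    using assms(1) unfolding contact_equiv_def by blast
  obtain v11 v12 v21 v22 P Q where V: "is_GL2 v11 v12 v21 v22" "is_aut P Q"
    and h: "h = contact_act (v11, v12, v21, v22) (P, Q) g"
    using assms(2) unfolding contact_equiv_def by blast
  show ?thesis unfolding h g by (rule contact_equiv_contact_act_contact_act[OF U(1) V(1) U(2) V(2)])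
qed

section \<open>Pushing the higher-order terms into pure powers of y\<close>

lemma ord_ge_decompose:
  fixes e :: "'a::comm_ring_1 ps2"
  assumes n: "4 \<le> n" and e: "ord_ge n e"
  obtains \<alpha> \<beta> \<gamma> where "e = varX ^ 3 * \<alpha> + varX * varY ^ 2 * \<beta> + varY ^ n * \<gamma>"
    and "ord_ge (n - 3) \<alpha>" and "ord_ge (n - 3) \<beta>" and "coeff2 \<gamma> 0 0 = coeff2 e 0 n"
proof
  define \<alpha> where "\<alpha> = ps2_of (\<lambda>a b. coeff2 e (a + 3) b)"
  define \<beta> where "\<beta> = ps2_of (\<lambda>a b. if a \<le> 1 then coeff2 e (a + 1) (b + 2) else 0)"
  define \<gamma> where "\<gamma> = ps2_of (\<lambda>a b. if a = 0 then coeff2 e 0 (b + n) else 0)"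
  show "e = varX ^ 3 * \<alpha> + varX * varY ^ 2 * \<beta> + varY ^ n * \<gamma>"
  proof (rule ps2_eqI)
    fix i j
    have z: "coeff2 e i j = 0" if "i + j < n" using e that by (simp add: ord_ge_def)
    have jj: "Suc (Suc (j - 2)) = j" if "2 \<le> j" using that by simp
    have jn: "2 \<le> j" if "n \<le> j" using that n by simp
    show "coeff2 e i j = coeff2 (varX ^ 3 * \<alpha> + varX * varY ^ 2 * \<beta> + varY ^ n * \<gamma>) i j"
      unfolding coeff2_add coeff2_varX_power_mult mult.assoc coeff2_varX_mult coeff2_varY_power_mult
        \<alpha>_def \<beta>_def \<gamma>_def coeff2_ps2_of
      using z n by (cases "i \<ge> 3"; cases "i = 0"; cases "j \<ge> 2"; cases "j \<ge> n") (auto simp: jj jn)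
  qed
  show "ord_ge (n - 3) \<alpha>" "ord_ge (n - 3) \<beta>"
    using e unfolding \<alpha>_def \<beta>_def ord_ge_def by auto
  show "coeff2 \<gamma> 0 0 = coeff2 e 0 n" by (simp add: \<gamma>_def)
qed

lemma is_aut_shear:
  assumes "1 \<le> m"
  shows "is_aut (varX + const2 s * varY ^ m) (varY :: 'a::comm_ring_1 ps2)"
proof -
  let ?p = "varX + const2 s * varY ^ m" and ?P = "varX - const2 s * varY ^ m"
  have y: "ord_ge 1 (varY ^ m :: 'a ps2)" using ord_ge_varY_power[of m] assms by (rule ord_ge_mono)
  have l: "ord_ge 1 ?p" "ord_ge 1 ?P"
    by (intro ord_ge_add ord_ge_const2_mult ord_ge_varX y, intro ord_ge_diff ord_ge_const2_mult ord_ge_varX y)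
  show ?thesis
    by (rule is_autI[OF l(1) ord_ge_varY l(2) ord_ge_varY])
       (simp_all add: subst2_add subst2_diff subst2_const2_mult subst2_power[OF l(1) ord_ge_varY]
         subst2_power[OF l(2) ord_ge_varY] subst2_varX[OF l(1) ord_ge_varY] subst2_varY[OF l(1) ord_ge_varY]
         subst2_varX[OF l(2) ord_ge_varY] subst2_varY[OF l(2) ord_ge_varY])
qed

text \<open>The shear \<open>x \<mapsto> x + s y\<^sup>d\<^sup>-\<^sup>2\<close> turns \<open>x y\<^sup>2\<close> into \<open>x y\<^sup>2 + s y\<^sup>d\<close>, which cancels the
  \<open>y\<^sup>d\<close>-term of the second component; in the first component it only adds \<open>3 x\<^sup>2 s y\<^sup>d\<^sup>-\<^sup>2\<close>
  and terms of order \<open>> d\<close>, so the coefficient of \<open>y\<^sup>d\<close> there is unchanged.\<close>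

lemma shear_step:
  fixes g1 g2 P :: "'a::comm_ring_1 ps2"
  assumes d: "4 \<le> d" and P: "ord_ge 4 P"
    and h1: "ord_ge d (g1 - varX ^ 3 - P)" and h2: "ord_ge d (g2 - varX * varY ^ 2)"
  obtains p where "is_aut p varY"
    and "ord_ge d (subst2 g1 p varY - varX ^ 3 - P)"
    and "coeff2 (subst2 g1 p varY - varX ^ 3 - P) 0 d = coeff2 (g1 - varX ^ 3 - P) 0 d"
    and "ord_ge d (subst2 g2 p varY - varX * varY ^ 2)"
    and "coeff2 (subst2 g2 p varY - varX * varY ^ 2) 0 d = 0"
proof
  define e1 where "e1 = g1 - varX ^ 3 - P"
  define e2 where "e2 = g2 - varX * varY ^ 2"
  define s where "s = - coeff2 e2 0 d"
  define \<sigma> where "\<sigma> = const2 s * varY ^ (d - 2)"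
  define p where "p = varX + \<sigma>"
  show "is_aut p varY" unfolding p_def \<sigma>_def by (rule is_aut_shear) (use d in simp)
  have ls: "ord_ge (d - 2) \<sigma>" unfolding \<sigma>_def by (intro ord_ge_const2_mult ord_ge_varY_power)
  have lp: "ord_ge 1 p" using ls d unfolding p_def by (intro ord_ge_add ord_ge_varX) (rule ord_ge_mono, auto)
  let ?s = "\<lambda>z. subst2 z p varY"
  have close: "ord_ge (Suc d) (?s z - z)" if "ord_ge 4 z" for z
  proof -
    have "ord_ge ((d - 3) + 1) (p - varX)" using ls d by (simp add: p_def) (rule ord_ge_mono, auto)
    moreover have "ord_ge ((d - 3) + 1) (varY - varY)" by simp
    ultimately have "ord_ge (4 + (d - 3)) (?s z - z)" using that by (rule ord_ge_subst2_minus)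
    thus ?thesis using d by (auto elim: ord_ge_mono)
  qed
  have sX: "?s varX = p" and sY: "?s varY = varY"
    by (rule subst2_varX[OF lp ord_ge_varY], rule subst2_varY[OF lp ord_ge_varY])
  have cube: "p ^ 3 - varX ^ 3 = 3 * varX\<^sup>2 * \<sigma> + (3 * varX * \<sigma>\<^sup>2 + \<sigma> ^ 3)"
    by (simp add: p_def power3_eq_cube power2_eq_square algebra_simps)
  have l1: "ord_ge d (3 * varX\<^sup>2 * \<sigma>)"
  proof -
    have "ord_ge (2 + (d - 2)) (varX\<^sup>2 * \<sigma>)" by (rule ord_ge_mult[OF ord_ge_varX_power ls])
    hence "ord_ge d (varX\<^sup>2 * \<sigma>)" by (rule ord_ge_mono) (use d in simp)
    thus ?thesis by (simp add: mult.assoc ord_ge_mult_left)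
  qed
  have l2: "ord_ge (Suc d) (3 * varX * \<sigma>\<^sup>2 + \<sigma> ^ 3)"
  proof (rule ord_ge_add)
    have "ord_ge (1 + (d - 2) * 2) (varX * \<sigma>\<^sup>2)" by (rule ord_ge_mult[OF ord_ge_varX ord_ge_power[OF ls]])
    hence "ord_ge (Suc d) (varX * \<sigma>\<^sup>2)" by (rule ord_ge_mono) (use d in simp)
    thus "ord_ge (Suc d) (3 * varX * \<sigma>\<^sup>2)" by (simp add: mult.assoc ord_ge_mult_left)
    have "ord_ge ((d - 2) * 3) (\<sigma> ^ 3)" by (rule ord_ge_power[OF ls])
    thus "ord_ge (Suc d) (\<sigma> ^ 3)" by (rule ord_ge_mono) (use d in simp)
  qed
  define R where "R = (3 * varX * \<sigma>\<^sup>2 + \<sigma> ^ 3) + (?s P - P) + (?s e1 - e1)"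
  have R: "ord_ge (Suc d) R"
    unfolding R_def using l2 close[OF P] close[OF ord_ge_mono[OF h1[folded e1_def] d]] by auto
  have E1: "?s g1 - varX ^ 3 - P = e1 + 3 * varX\<^sup>2 * \<sigma> + R"
  proof -
    have "g1 = varX ^ 3 + P + e1" by (simp add: e1_def)
    hence "?s g1 = p ^ 3 + ?s P + ?s e1" by (simp add: subst2_add subst2_power[OF lp ord_ge_varY] sX)
    thus ?thesis unfolding R_def using cube by (simp add: algebra_simps)
  qed
  show "ord_ge d (?s g1 - varX ^ 3 - P)"
    unfolding E1 using h1[folded e1_def] l1 ord_ge_mono[OF R] by auto
  have "coeff2 (3 * varX\<^sup>2 * \<sigma>) 0 d = 0"
    by (simp add: mult.commute[of 3] mult.assoc power2_eq_square coeff2_varX_mult)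
  moreover have "coeff2 R 0 d = 0" using R by (simp add: ord_ge_def)
  ultimately show "coeff2 (?s g1 - varX ^ 3 - P) 0 d = coeff2 (g1 - varX ^ 3 - P) 0 d"
    unfolding E1 by (simp add: e1_def)
  have "varY ^ (d - 2) * varY ^ 2 = (varY ^ (d - 2 + 2) :: 'a ps2)" by (simp only: power_add)
  also have "d - 2 + 2 = d" using d by simp
  finally have "\<sigma> * varY ^ 2 = const2 s * varY ^ d" by (simp add: \<sigma>_def mult.assoc)
  moreover have "g2 = varX * varY ^ 2 + e2" by (simp add: e2_def)
  hence "?s g2 = p * varY ^ 2 + ?s e2"
    by (simp add: subst2_add subst2_mult[OF lp ord_ge_varY] subst2_power[OF lp ord_ge_varY] sX sY)
  ultimately have E2: "?s g2 - varX * varY ^ 2 = const2 s * varY ^ d + e2 + (?s e2 - e2)"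
    by (simp add: p_def algebra_simps)
  show "ord_ge d (?s g2 - varX * varY ^ 2)"
    unfolding E2 using h2[folded e2_def] close[OF ord_ge_mono[OF h2[folded e2_def] d]]
    by (intro ord_ge_add ord_ge_const2_mult ord_ge_varY_power) (auto elim: ord_ge_mono)
  have "coeff2 (?s e2 - e2) 0 d = 0" using close[OF ord_ge_mono[OF h2[folded e2_def] d]] by (simp add: ord_ge_def)
  thus "coeff2 (?s g2 - varX * varY ^ 2) 0 d = 0"
    unfolding E2 by (simp add: s_def coeff2_const2_mult_varY_power del: coeff2_const2_mult)
qed

text \<open>Once the second component has no \<open>y\<^sup>d\<close>-term, decomposing the errors as
  \<open>x\<^sup>3 \<alpha> + x y\<^sup>2 \<beta> + y\<^sup>d \<gamma>\<close> and multiplying by the matrix \<open>1 - (\<alpha>, \<beta>; \<alpha>', \<beta>')\<close> leaves only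
  the term \<open>c y\<^sup>d\<close> in degree \<open>d\<close>.\<close>

lemma matrix_step:
  fixes P E1 E2 :: "'a::field ps2"
  assumes d: "4 \<le> d" and P: "ord_ge 4 P" and E1: "ord_ge d E1" and E2: "ord_ge d E2"
    and E2_0_d: "coeff2 E2 0 d = 0"
  obtains w11 w12 w21 w22 where "is_GL2 w11 w12 w21 w22"
    and "ord_ge (Suc d) (w11 * (varX ^ 3 + P + E1) + w12 * (varX * varY ^ 2 + E2)
                          - varX ^ 3 - (P + const2 (coeff2 E1 0 d) * varY ^ d))"
    and "ord_ge (Suc d) (w21 * (varX ^ 3 + P + E1) + w22 * (varX * varY ^ 2 + E2) - varX * varY ^ 2)"
proof -
  obtain \<alpha> \<beta> \<gamma> where D1: "E1 = varX ^ 3 * \<alpha> + varX * varY ^ 2 * \<beta> + varY ^ d * \<gamma>"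
    "ord_ge (d - 3) \<alpha>" "ord_ge (d - 3) \<beta>" "coeff2 \<gamma> 0 0 = coeff2 E1 0 d"
    using ord_ge_decompose[OF d E1] by blast
  obtain \<alpha>' \<beta>' \<gamma>' where D2: "E2 = varX ^ 3 * \<alpha>' + varX * varY ^ 2 * \<beta>' + varY ^ d * \<gamma>'"
    "ord_ge (d - 3) \<alpha>'" "ord_ge (d - 3) \<beta>'" "coeff2 \<gamma>' 0 0 = 0"
    using ord_ge_decompose[OF d E2] E2_0_d by metis
  define c where "c = coeff2 E1 0 d"
  have gam: "ord_ge (Suc d) (varY ^ d * (\<gamma> - const2 c))" "ord_ge (Suc d) (varY ^ d * \<gamma>')"
    using ord_ge_varY_power_mult[OF ord_ge_minus_const2[of \<gamma>], of d]
      ord_ge_varY_power_mult[OF ord_ge_minus_const2[of \<gamma>'], of d] D1(4) D2(4)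
    by (simp_all add: c_def add.commute)
  have PE: "ord_ge 4 (P + E1)" "ord_ge 4 E2" using P E1 E2 d by (auto elim: ord_ge_mono)
  have small: "ord_ge (Suc d) (x * y)" if "ord_ge (d - 3) x" "ord_ge 4 y" for x y
    using ord_ge_mult[OF that] d by (auto elim: ord_ge_mono)
  have "coeff2 \<alpha> 0 0 = 0" "coeff2 \<beta> 0 0 = 0" "coeff2 \<alpha>' 0 0 = 0" "coeff2 \<beta>' 0 0 = 0"
    using D1(2,3) D2(2,3) d by (auto simp: ord_ge_def)
  hence "coeff2 ((1 - \<alpha>) * (1 - \<beta>') - (- \<beta>) * (- \<alpha>')) 0 0 = 1"
    by (simp add: coeff2_mult_0_0 coeff2_one)
  hence GL: "is_GL2 (1 - \<alpha>) (- \<beta>) (- \<alpha>') (1 - \<beta>')"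
    unfolding is_GL2_iff_det_dvd_one by (intro ps2_dvd_one) simp
  have "(1 - \<alpha>) * (varX ^ 3 + P + E1) + - \<beta> * (varX * varY ^ 2 + E2) - varX ^ 3 - (P + const2 c * varY ^ d)
      = varY ^ d * (\<gamma> - const2 c) - \<alpha> * (P + E1) - \<beta> * E2"
    by (simp add: D1(1) algebra_simps)
  hence first: "ord_ge (Suc d) ((1 - \<alpha>) * (varX ^ 3 + P + E1) + - \<beta> * (varX * varY ^ 2 + E2)
      - varX ^ 3 - (P + const2 (coeff2 E1 0 d) * varY ^ d))"
    using gam(1) small[OF D1(2) PE(1)] small[OF D1(3) PE(2)] by (simp add: c_def ord_ge_diff)
  have "- \<alpha>' * (varX ^ 3 + P + E1) + (1 - \<beta>') * (varX * varY ^ 2 + E2) - varX * varY ^ 2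
      = varY ^ d * \<gamma>' - \<alpha>' * (P + E1) - \<beta>' * E2"
    by (simp add: D2(1) algebra_simps)
  hence "ord_ge (Suc d) (- \<alpha>' * (varX ^ 3 + P + E1) + (1 - \<beta>') * (varX * varY ^ 2 + E2) - varX * varY ^ 2)"
    using gam(2) small[OF D2(2) PE(1)] small[OF D2(3) PE(2)] by (simp add: ord_ge_diff)
  with GL first show ?thesis by (rule that)
qed

lemma contact_equiv_step:
  fixes f g :: "'a::field ps2 \<times> 'a ps2"
  assumes fg: "contact_equiv f g" and d: "4 \<le> d" and P: "ord_ge 4 P"
    and g1: "ord_ge d (fst g - varX ^ 3 - P)" and g2: "ord_ge d (snd g - varX * varY ^ 2)"
  obtains g' where "contact_equiv f g'"
    and "ord_ge (Suc d) (fst g' - varX ^ 3 - (P + const2 (coeff2 (fst g - varX ^ 3 - P) 0 d) * varY ^ d))"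
    and "ord_ge (Suc d) (snd g' - varX * varY ^ 2)"
proof -
  obtain p where p: "is_aut p varY"
    and E1: "ord_ge d (subst2 (fst g) p varY - varX ^ 3 - P)"
    and c1: "coeff2 (subst2 (fst g) p varY - varX ^ 3 - P) 0 d = coeff2 (fst g - varX ^ 3 - P) 0 d"
    and E2: "ord_ge d (subst2 (snd g) p varY - varX * varY ^ 2)"
    and c2: "coeff2 (subst2 (snd g) p varY - varX * varY ^ 2) 0 d = 0"
    by (rule shear_step[OF d P g1 g2])
  have s1: "varX ^ 3 + P + (subst2 (fst g) p varY - varX ^ 3 - P) = subst2 (fst g) p varY"
    and s2: "varX * varY ^ 2 + (subst2 (snd g) p varY - varX * varY ^ 2) = subst2 (snd g) p varY"
    by simp_all
  obtain w11 w12 w21 w22 where W: "is_GL2 w11 w12 w21 w22"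
    and "ord_ge (Suc d) (w11 * subst2 (fst g) p varY + w12 * subst2 (snd g) p varY
           - varX ^ 3 - (P + const2 (coeff2 (fst g - varX ^ 3 - P) 0 d) * varY ^ d))"
    and "ord_ge (Suc d) (w21 * subst2 (fst g) p varY + w22 * subst2 (snd g) p varY - varX * varY ^ 2)"
    by (rule matrix_step[OF d P E1 E2 c2, unfolded s1 s2 c1])
  moreover have "contact_equiv f (contact_act (w11, w12, w21, w22) (p, varY) g)"
    using fg contact_equivI[OF W p] by (rule contact_equiv_trans)
  ultimately show ?thesis using that by simp
qed

definition y_poly :: "(nat \<Rightarrow> 'a) \<Rightarrow> nat \<Rightarrow> 'a::comm_ring_1 ps2" where
  "y_poly c N = (\<Sum>j\<in>{4..<N}. const2 (c j) * varY ^ j)"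

lemma coeff2_y_poly: "coeff2 (y_poly c N) a b = (if a = 0 \<and> 4 \<le> b \<and> b < N then c b else 0)"
proof -
  have "coeff2 (y_poly c N) a b = (\<Sum>j\<in>{4..<N}. if j = b then (if a = 0 then c b else 0) else 0)"
    unfolding y_poly_def coeff2_sum coeff2_const2_mult_varY_power by (intro sum.cong) auto
  also have "\<dots> = (if a = 0 \<and> 4 \<le> b \<and> b < N then c b else 0)" by (subst sum.delta) auto
  finally show ?thesis .
qed

lemma ord_ge_y_poly: "ord_ge 4 (y_poly c N)"
  by (simp add: ord_ge_def coeff2_y_poly)

lemma y_poly_Suc: "4 \<le> N \<Longrightarrow> y_poly (c(N := v)) (Suc N) = y_poly c N + const2 v * varY ^ N"
proof -
  assume N: "4 \<le> N"
  have "{4..<Suc N} = insert N {4..<N}" using N by auto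
  hence "y_poly (c(N := v)) (Suc N) = const2 v * varY ^ N + (\<Sum>j\<in>{4..<N}. const2 ((c(N := v)) j) * varY ^ j)"
    unfolding y_poly_def by simp
  also have "(\<Sum>j\<in>{4..<N}. const2 ((c(N := v)) j) * varY ^ j) = y_poly c N"
    unfolding y_poly_def by (intro sum.cong) auto
  finally show ?thesis by (metis add.commute)
qed

lemma contact_equiv_y_poly:
  fixes f h :: "'a::field ps2 \<times> 'a ps2"
  assumes fh: "contact_equiv f h"
    and h1: "ord_ge 4 (fst h - varX ^ 3)" and h2: "ord_ge 4 (snd h - varX * varY ^ 2)"
    and N: "4 \<le> N"
  shows "\<exists>g c. contact_equiv f g \<and> ord_ge N (fst g - varX ^ 3 - y_poly c N)
                 \<and> ord_ge N (snd g - varX * varY ^ 2)"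
  using N
proof (induction N rule: dec_induct)
  case base
  have "y_poly (\<lambda>_. 0::'a) 4 = 0" by (simp add: y_poly_def)
  thus ?case using fh h1 h2 by (intro exI[of _ h] exI[of _ "\<lambda>_. 0::'a"]) simp
next
  case (step N)
  then obtain g c where g: "contact_equiv f g" "ord_ge N (fst g - varX ^ 3 - y_poly c N)"
      "ord_ge N (snd g - varX * varY ^ 2)"
    by blast
  obtain g' where "contact_equiv f g'"
    "ord_ge (Suc N) (fst g' - varX ^ 3 - y_poly (c(N := coeff2 (fst g - varX ^ 3 - y_poly c N) 0 N)) (Suc N))"
    "ord_ge (Suc N) (snd g' - varX * varY ^ 2)"
    using contact_equiv_step[OF g(1) step.hyps(1) ord_ge_y_poly g(2,3)] by (auto simp: y_poly_Suc step.hyps(1))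
  thus ?case by blast
qed

section \<open>The ideal of the critical locus\<close>

abbreviation crit_ideal :: "'a::comm_ring_1 ps2 \<times> 'a ps2 \<Rightarrow> 'a ps2 set" where
  "crit_ideal g \<equiv> ideal_span {fst g, snd g, jac_minor g}"

lemma jac_minor_subst2:
  assumes "ord_ge 1 p" "ord_ge 1 q"
  shows "jac_minor (subst2 f1 p q, subst2 f2 p q)
           = subst2 (jac_minor (f1, f2)) p q * (dX p * dY q - dY p * dX q)"
  unfolding jac_minor_def fst_conv snd_conv dX_subst2[OF assms] dY_subst2[OF assms]
  by (simp add: subst2_diff subst2_mult[OF assms] algebra_simps)

text \<open>The linear part of the inverse automorphism inverts the linear part of \<open>(p, q)\<close>.\<close>

lemma is_aut_jacobian_dvd_one:
  fixes p q :: "'a::field ps2"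
  assumes a: "is_aut p q"
  shows "(dX p * dY q - dY p * dX q) dvd 1"
proof -
  have l: "ord_ge 1 p" "ord_ge 1 q" using a is_aut_ord_ge by blast+
  have "surj (\<lambda>g. subst2 g p q)" using a by (simp add: is_aut_def bij_is_surj)
  then obtain h1 h2 where h1: "subst2 h1 p q = varX" and h2: "subst2 h2 p q = varY"
    by (metis surjD)
  have z1: "coeff2 h1 0 0 = 0" and z2: "coeff2 h2 0 0 = 0"
    using coeff2_subst2_0_0[of h1 p q] coeff2_subst2_0_0[of h2 p q] h1 h2
    by (simp_all add: coeff2_varX coeff2_varY)
  define p10 p01 q10 q01 where "p10 = coeff2 p 1 0" and "p01 = coeff2 p 0 1"
    and "q10 = coeff2 q 1 0" and "q01 = coeff2 q 0 1"
  have e1: "coeff2 h1 1 0 * p10 + coeff2 h1 0 1 * q10 = 1" "coeff2 h1 1 0 * p01 + coeff2 h1 0 1 * q01 = 0"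
    using coeff2_subst2_linear_part[OF l z1] h1 by (simp_all add: coeff2_varX p10_def p01_def q10_def q01_def)
  have e2: "coeff2 h2 1 0 * p10 + coeff2 h2 0 1 * q10 = 0" "coeff2 h2 1 0 * p01 + coeff2 h2 0 1 * q01 = 1"
    using coeff2_subst2_linear_part[OF l z2] h2 by (simp_all add: coeff2_varY p10_def p01_def q10_def q01_def)
  have "(coeff2 h1 1 0 * coeff2 h2 0 1 - coeff2 h1 0 1 * coeff2 h2 1 0) * (p10 * q01 - p01 * q10) =
      (coeff2 h1 1 0 * p10 + coeff2 h1 0 1 * q10) * (coeff2 h2 1 0 * p01 + coeff2 h2 0 1 * q01)
      - (coeff2 h1 1 0 * p01 + coeff2 h1 0 1 * q01) * (coeff2 h2 1 0 * p10 + coeff2 h2 0 1 * q10)"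
    by (simp add: algebra_simps)
  also have "\<dots> = 1" using e1 e2 by simp
  finally have "p10 * q01 - p01 * q10 \<noteq> 0" by auto
  moreover have "coeff2 (dX p * dY q - dY p * dX q) 0 0 = p10 * q01 - p01 * q10"
    by (simp add: coeff2_mult_0_0 coeff2_dX coeff2_dY p10_def p01_def q10_def q01_def)
  ultimately show ?thesis by (intro ps2_dvd_one) simp
qed

lemma crit_ideal_matrix:
  fixes u11 u12 u21 u22 \<phi> \<psi> :: "'a::comm_ring_1 ps2"
  assumes U: "is_GL2 u11 u12 u21 u22"
  defines "G \<equiv> (u11 * \<phi> + u12 * \<psi>, u21 * \<phi> + u22 * \<psi>)"
  shows "\<phi> \<in> crit_ideal G" and "\<psi> \<in> crit_ideal G" and "jac_minor (\<phi>, \<psi>) \<in> crit_ideal G"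
proof -
  obtain v11 v12 v21 v22 where v:
    "v11*u11 + v12*u21 = 1" "v11*u12 + v12*u22 = 0" "v21*u11 + v22*u21 = 0" "v21*u12 + v22*u22 = 1"
    using U unfolding is_GL2_def by blast
  have G: "fst G \<in> crit_ideal G" "snd G \<in> crit_ideal G" "jac_minor G \<in> crit_ideal G"
    by (auto intro: ideal_span_mem)
  have "v11 * fst G + v12 * snd G = (v11*u11 + v12*u21) * \<phi> + (v11*u12 + v12*u22) * \<psi>"
    by (simp add: G_def algebra_simps)
  hence "\<phi> = v11 * fst G + v12 * snd G" using v by simp
  thus \<phi>: "\<phi> \<in> crit_ideal G" using G by (auto intro: ideal_span_add ideal_span_mult)
  have "v21 * fst G + v22 * snd G = (v21*u11 + v22*u21) * \<phi> + (v21*u12 + v22*u22) * \<psi>"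
    by (simp add: G_def algebra_simps)
  hence "\<psi> = v21 * fst G + v22 * snd G" using v by simp
  thus \<psi>: "\<psi> \<in> crit_ideal G" using G by (auto intro: ideal_span_add ideal_span_mult)
  obtain e where e: "(u11 * u22 - u12 * u21) * e = 1"
    using U unfolding is_GL2_iff_det_dvd_one by (metis dvd_def)
  text \<open>By the product rule the Jacobian of \<open>G\<close> is \<open>det U\<close> times that of \<open>\<phi>\<close>, modulo
    terms carrying a factor \<open>\<phi>\<close> or \<open>\<psi>\<close>.\<close>
  define A1x A1y A2x A2y where "A1x = u11 * dX \<phi> + u12 * dX \<psi>" and "A1y = u11 * dY \<phi> + u12 * dY \<psi>"
    and "A2x = u21 * dX \<phi> + u22 * dX \<psi>" and "A2y = u21 * dY \<phi> + u22 * dY \<psi>"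
  define B1x B1y B2x B2y where "B1x = dX u11 * \<phi> + dX u12 * \<psi>" and "B1y = dY u11 * \<phi> + dY u12 * \<psi>"
    and "B2x = dX u21 * \<phi> + dX u22 * \<psi>" and "B2y = dY u21 * \<phi> + dY u22 * \<psi>"
  have B: "B1x \<in> crit_ideal G" "B1y \<in> crit_ideal G" "B2x \<in> crit_ideal G" "B2y \<in> crit_ideal G"
    unfolding B1x_def B1y_def B2x_def B2y_def using \<phi> \<psi> by (auto intro: ideal_span_add ideal_span_mult)
  have dG: "dX (fst G) = A1x + B1x" "dY (fst G) = A1y + B1y" "dX (snd G) = A2x + B2x" "dY (snd G) = A2y + B2y"
    by (simp_all add: G_def A1x_def A1y_def A2x_def A2y_def B1x_def B1y_def B2x_def B2y_def
        dX_add dY_add dX_mult dY_mult algebra_simps)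
  have "jac_minor G = (u11 * u22 - u12 * u21) * jac_minor (\<phi>, \<psi>)
      + ((A1x * B2y + B1x * (A2y + B2y)) - (A1y * B2x + B1y * (A2x + B2x)))"
    unfolding jac_minor_def fst_conv snd_conv dG
    by (simp add: A1x_def A1y_def A2x_def A2y_def algebra_simps)
  moreover have "(A1x * B2y + B1x * (A2y + B2y)) - (A1y * B2x + B1y * (A2x + B2x)) \<in> crit_ideal G"
  proof -
    have "A1x * B2y \<in> crit_ideal G" "A1y * B2x \<in> crit_ideal G"
      by (rule ideal_span_mult[OF B(4)], rule ideal_span_mult[OF B(3)])
    moreover have "B1x * (A2y + B2y) \<in> crit_ideal G" "B1y * (A2x + B2x) \<in> crit_ideal G"
      using ideal_span_mult[OF B(1), of "A2y + B2y"] ideal_span_mult[OF B(2), of "A2x + B2x"]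
      by (simp_all add: mult.commute)
    ultimately show ?thesis by (intro ideal_span_diff ideal_span_add)
  qed
  ultimately have "(u11 * u22 - u12 * u21) * jac_minor (\<phi>, \<psi>) \<in> crit_ideal G"
    using ideal_span_diff[OF G(3)] by fastforce
  hence "e * ((u11 * u22 - u12 * u21) * jac_minor (\<phi>, \<psi>)) \<in> crit_ideal G" by (rule ideal_span_mult)
  thus "jac_minor (\<phi>, \<psi>) \<in> crit_ideal G" using e by (simp add: mult.assoc[symmetric] mult.commute[of e])
qed

lemma subst2_in_crit_ideal:
  fixes f :: "'a::field ps2 \<times> 'a ps2"
  assumes U: "is_GL2 u11 u12 u21 u22" and a: "is_aut p q"
    and h: "h \<in> crit_ideal f"
  shows "subst2 h p q \<in> crit_ideal (contact_act (u11, u12, u21, u22) (p, q) f)"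
proof -
  have l: "ord_ge 1 p" "ord_ge 1 q" using a is_aut_ord_ge by blast+
  obtain A B C where h: "h = A * fst f + B * snd f + C * jac_minor f"
    using h by (rule ideal_span_insert3E)
  define \<phi>1 \<phi>2 where "\<phi>1 = subst2 (fst f) p q" and "\<phi>2 = subst2 (snd f) p q"
  let ?I = "crit_ideal (contact_act (u11, u12, u21, u22) (p, q) f)"
  have I: "\<phi>1 \<in> ?I" "\<phi>2 \<in> ?I" "jac_minor (\<phi>1, \<phi>2) \<in> ?I"
    using crit_ideal_matrix[OF U, where \<phi> = \<phi>1 and \<psi> = \<phi>2] by (simp_all add: \<phi>1_def \<phi>2_def)
  obtain \<Delta>' where D: "(dX p * dY q - dY p * dX q) * \<Delta>' = 1"
    using is_aut_jacobian_dvd_one[OF a] by (metis dvd_def)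
  have "jac_minor (\<phi>1, \<phi>2) = subst2 (jac_minor f) p q * (dX p * dY q - dY p * dX q)"
    unfolding \<phi>1_def \<phi>2_def using jac_minor_subst2[OF l, of "fst f" "snd f"] by simp
  hence "subst2 (jac_minor f) p q = jac_minor (\<phi>1, \<phi>2) * \<Delta>'"
    using D by (metis mult.assoc mult.right_neutral)
  hence J: "subst2 (jac_minor f) p q \<in> ?I"
    using ideal_span_mult[OF I(3), of \<Delta>'] by (simp add: mult.commute)
  have "subst2 h p q = subst2 A p q * \<phi>1 + subst2 B p q * \<phi>2 + subst2 C p q * subst2 (jac_minor f) p q"
    unfolding h by (simp add: subst2_add subst2_mult[OF l] \<phi>1_def \<phi>2_def)
  thus ?thesis using I J by (simp add: ideal_span_add ideal_span_mult)
qed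

lemma is_ICIS_varY_power_in_crit_ideal:
  fixes f :: "'a::field ps2 \<times> 'a ps2"
  assumes "is_ICIS f"
  obtains k where "\<And>g. contact_equiv f g \<Longrightarrow> varY ^ k \<in> crit_ideal g"
proof -
  obtain k where k: "ideal_pow maxid k \<subseteq> crit_ideal f"
    using assms unfolding is_ICIS_def by blast
  have "varY ^ k \<in> crit_ideal g" if "contact_equiv f g" for g
  proof -
    from that obtain u11 u12 u21 u22 p q where U: "is_GL2 u11 u12 u21 u22" and a: "is_aut p q"
      and g: "g = contact_act (u11, u12, u21, u22) (p, q) f"
      unfolding contact_equiv_def by blast
    have l: "ord_ge 1 p" "ord_ge 1 q" using a is_aut_ord_ge by blast+
    have "surj (\<lambda>g. subst2 g p q)" using a by (simp add: is_aut_def bij_is_surj)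
    then obtain h where h: "subst2 h p q = varY" by (metis surjD)
    have "coeff2 h 0 0 = 0" using coeff2_subst2_0_0[of h p q] h by (simp add: coeff2_varY)
    hence "h ^ k \<in> crit_ideal f"
      using k power_in_ideal_pow[of h maxid k] by (auto simp: maxid_iff_ord_ge ord_ge_def)
    hence "subst2 (h ^ k) p q \<in> crit_ideal g" unfolding g by (rule subst2_in_crit_ideal[OF U a])
    thus ?thesis by (simp add: subst2_power[OF l] h)
  qed
  thus ?thesis by (rule that)
qed

text \<open>Modulo \<open>x\<close> and \<open>m\<^sup>k\<^sup>+\<^sup>1\<close>, all three generators of the ideal vanish for
  \<open>(x\<^sup>3, x y\<^sup>2)\<close>, so none of its elements has a \<open>y\<^sup>k\<close>-term.\<close>

lemma varY_power_notin_crit_ideal: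
  fixes g :: "'a::comm_ring_1 ps2 \<times> 'a ps2"
  assumes g1: "ord_ge (k + 2) (fst g - varX ^ 3)" and g2: "ord_ge (k + 2) (snd g - varX * varY ^ 2)"
  shows "varY ^ k \<notin> crit_ideal g"
proof
  assume "varY ^ k \<in> crit_ideal g"
  then obtain a b c where e: "varY ^ k = a * fst g + b * snd g + c * jac_minor g"
    by (rule ideal_span_insert3E)
  define e1 e2 where "e1 = fst g - varX ^ 3" and "e2 = snd g - varX * varY ^ 2"
  have no_y_k: "coeff2 (a' * z) 0 k = 0" if "z = varX * u + r" "ord_ge (Suc k) r" for a' z u r
  proof -
    have "a' * z = varX * (a' * u) + a' * r" using that(1) by (simp add: algebra_simps)
    moreover have "coeff2 (a' * r) 0 k = 0" using ord_ge_mult_left[OF that(2)] by (simp add: ord_ge_def)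
    ultimately show ?thesis by (simp add: coeff2_varX_mult)
  qed
  have l1: "ord_ge (Suc k) e1" "ord_ge (Suc k) e2"
    using g1 g2 unfolding e1_def e2_def by (auto elim: ord_ge_mono)
  have d: "ord_ge (Suc k) (dX e1)" "ord_ge (Suc k) (dY e1)" "ord_ge (Suc k) (dX e2)" "ord_ge (Suc k) (dY e2)"
    using ord_ge_dX[of "Suc k" e1] ord_ge_dY[of "Suc k" e1] ord_ge_dX[of "Suc k" e2] ord_ge_dY[of "Suc k" e2]
      g1 g2 unfolding e1_def e2_def by (simp_all add: numeral_2_eq_2)
  have c1: "coeff2 (a * fst g) 0 k = 0"
    by (rule no_y_k[of _ "varX ^ 2" e1]) (simp add: e1_def power3_eq_cube power2_eq_square, rule l1(1))
  have c2: "coeff2 (b * snd g) 0 k = 0"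
    by (rule no_y_k[of _ "varY ^ 2" e2]) (simp add: e2_def, rule l1(2))
  have "dX (fst g) = 3 * varX ^ 2 + dX e1" "dY (fst g) = dY e1"
    "dX (snd g) = varY ^ 2 + dX e2" "dY (snd g) = varX * (2 * varY) + dY e2"
    unfolding e1_def e2_def
    by (simp_all add: dX_diff dY_diff dX_mult dY_mult dX_power dY_power dX_varX dY_varX dX_varY dY_varY)
  hence "jac_minor g = varX * (3 * varX * (varX * (2 * varY) + dY e2)) +
      (dX e1 * (varX * (2 * varY) + dY e2) - dY e1 * (varY ^ 2 + dX e2))"
    unfolding jac_minor_def by (simp add: algebra_simps power2_eq_square)
  moreover have "ord_ge (Suc k) (dX e1 * (varX * (2 * varY) + dY e2) - dY e1 * (varY ^ 2 + dX e2))"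
    using d by (intro ord_ge_diff ord_ge_mult_right)
  ultimately have c3: "coeff2 (c * jac_minor g) 0 k = 0" by (rule no_y_k)
  have "coeff2 (varY ^ k :: 'a ps2) 0 k = 1"
    using coeff2_varY_power_mult[of k "1::'a ps2" 0 k] by (simp add: coeff2_one)
  moreover have "coeff2 (varY ^ k :: 'a ps2) 0 k = 0" unfolding e using c1 c2 c3 by simp
  ultimately show False by simp
qed

section \<open>Finite determinacy of the normal form\<close>

text \<open>\<open>m_span r\<close> is \<open>m \<cdot> \<langle>x\<^sup>3 + y\<^sup>r, x y\<^sup>2\<rangle>\<close>; a perturbation with entries in it is undone by
  a matrix of the form \<open>1 + (entries in m)\<close>.\<close>

definition m_span :: "nat \<Rightarrow> 'a::comm_ring_1 ps2 set" where
  "m_span r = {a * (varX ^ 3 + varY ^ r) + b * (varX * varY ^ 2) | a b. ord_ge 1 a \<and> ord_ge 1 b}"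

lemma m_spanI:
  "ord_ge 1 a \<Longrightarrow> ord_ge 1 b \<Longrightarrow> a * (varX ^ 3 + varY ^ r) + b * (varX * varY ^ 2) \<in> m_span r"
  unfolding m_span_def by blast

lemma m_span_add: "x \<in> m_span r \<Longrightarrow> y \<in> m_span r \<Longrightarrow> x + y \<in> m_span r"
proof -
  assume "x \<in> m_span r" "y \<in> m_span r"
  then obtain a b a' b' where "x = a * (varX ^ 3 + varY ^ r) + b * (varX * varY ^ 2)"
    "y = a' * (varX ^ 3 + varY ^ r) + b' * (varX * varY ^ 2)"
    "ord_ge 1 a" "ord_ge 1 b" "ord_ge 1 a'" "ord_ge 1 b'"
    unfolding m_span_def by blast
  moreover from this have "(a + a') * (varX ^ 3 + varY ^ r) + (b + b') * (varX * varY ^ 2) \<in> m_span r"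
    by (intro m_spanI ord_ge_add)
  ultimately show ?thesis by (simp add: algebra_simps)
qed

lemma m_span_mult: "x \<in> m_span r \<Longrightarrow> z * x \<in> m_span r"
proof -
  assume "x \<in> m_span r"
  then obtain a b where "x = a * (varX ^ 3 + varY ^ r) + b * (varX * varY ^ 2)" "ord_ge 1 a" "ord_ge 1 b"
    unfolding m_span_def by blast
  moreover from this have "(z * a) * (varX ^ 3 + varY ^ r) + (z * b) * (varX * varY ^ 2) \<in> m_span r"
    by (intro m_spanI ord_ge_mult_left)
  ultimately show ?thesis by (simp add: algebra_simps)
qed

lemma m_span_diff: "x \<in> m_span r \<Longrightarrow> y \<in> m_span r \<Longrightarrow> x - y \<in> m_span r"
  using m_span_add[of x r "(- 1) * y"] m_span_mult[of y r "- 1"] by simp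

lemma normal_mult_in_m_span: "ord_ge 1 a \<Longrightarrow> a * (varX ^ 3 + varY ^ r) \<in> m_span r"
  using m_spanI[of a 0] by simp

lemma varX_varY2_mult_in_m_span: "ord_ge 1 b \<Longrightarrow> varX * varY ^ 2 * b \<in> m_span r"
  using m_spanI[of 0 b] by (simp add: mult.commute)

lemma power_mult_power_eq: "a + b = c \<Longrightarrow> x ^ a * x ^ b = (x::'a::monoid_mult) ^ c"
  by (metis power_add)

lemma varY_power_in_m_span:
  assumes "r + 2 \<le> m"
  shows "(varY ^ m :: 'a::comm_ring_1 ps2) \<in> m_span r"
proof -
  have "(varY ^ m :: 'a ps2) = varY ^ (m - r) * (varX ^ 3 + varY ^ r)
      - (varX ^ 2 * varY ^ (m - r - 2)) * (varX * varY ^ 2)"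
  proof -
    have "(varY ^ (m - r) * varY ^ r :: 'a ps2) = varY ^ m" "(varY ^ (m - r - 2) * varY ^ 2 :: 'a ps2) = varY ^ (m - r)"
      by (rule power_mult_power_eq, use assms in simp)+
    thus ?thesis by (simp add: algebra_simps power3_eq_cube power2_eq_square)
  qed
  moreover have "ord_ge 1 (varY ^ (m - r) :: 'a ps2)"
    by (rule ord_ge_mono[OF ord_ge_varY_power]) (use assms in simp)
  moreover have "ord_ge 1 (- (varX ^ 2 * varY ^ (m - r - 2)) :: 'a ps2)"
    using ord_ge_mult[OF ord_ge_varX_power[of 2] ord_ge_varY_power[of "m - r - 2"]]
    by (intro ord_ge_uminus) (rule ord_ge_mono, auto)
  ultimately show ?thesis
    using m_spanI[of "varY ^ (m - r)" "- (varX ^ 2 * varY ^ (m - r - 2))" r] by simp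
qed

lemma varX_cube_mult_in_m_span:
  assumes r: "4 \<le> r" and a: "ord_ge (r + 1) \<alpha>"
  shows "varX ^ 3 * \<alpha> \<in> m_span r"
proof -
  define \<alpha>1 where "\<alpha>1 = ps2_of (\<lambda>a b. coeff2 \<alpha> (a + 1) b)"
  define \<alpha>2 where "\<alpha>2 = ps2_of (\<lambda>a b. if a = 0 then coeff2 \<alpha> 0 (b + (r + 1)) else 0)"
  have dec: "\<alpha> = varX * \<alpha>1 + varY ^ (r + 1) * \<alpha>2"
  proof (rule ps2_eqI)
    fix i j
    show "coeff2 \<alpha> i j = coeff2 (varX * \<alpha>1 + varY ^ (r + 1) * \<alpha>2) i j"
      using a unfolding coeff2_add coeff2_varX_mult coeff2_varY_power_mult \<alpha>1_def \<alpha>2_def coeff2_ps2_of ord_ge_def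
      by (cases i) auto
  qed
  have "varY ^ r * \<alpha> = varX * varY ^ 2 * (varY ^ (r - 2) * \<alpha>1) + varY ^ (2 * r + 1) * \<alpha>2"
  proof -
    have e1: "(varY ^ 2 * varY ^ (r - 2) :: 'a ps2) = varY ^ r"
      and e2: "(varY ^ r * varY ^ (r + 1) :: 'a ps2) = varY ^ (2 * r + 1)"
      by (rule power_mult_power_eq, use r in simp)+
    show ?thesis unfolding e2[symmetric] unfolding e1[symmetric] by (subst dec) (simp add: algebra_simps)
  qed
  hence "varX ^ 3 * \<alpha> = \<alpha> * (varX ^ 3 + varY ^ r) - (varX * varY ^ 2 * (varY ^ (r - 2) * \<alpha>1) + varY ^ (2 * r + 1) * \<alpha>2)"
    by (simp add: algebra_simps)
  moreover have "\<alpha> * (varX ^ 3 + varY ^ r) \<in> m_span r"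
    using ord_ge_mono[OF a, of 1] by (simp add: normal_mult_in_m_span)
  moreover have "varX * varY ^ 2 * (varY ^ (r - 2) * \<alpha>1) \<in> m_span r"
    by (rule varX_varY2_mult_in_m_span) (rule ord_ge_mono[OF ord_ge_varY_power_mult[of 0 \<alpha>1 "r - 2"]], simp, use r in simp)
  moreover have "varY ^ (2 * r + 1) * \<alpha>2 \<in> m_span r"
    using m_span_mult[OF varY_power_in_m_span[of r "2 * r + 1"], of \<alpha>2] r by (simp add: mult.commute)
  ultimately show ?thesis by (auto intro: m_span_diff m_span_add)
qed

lemma ord_ge_in_m_span:
  assumes r: "4 \<le> r" and E: "ord_ge (r + 4) E"
  shows "E \<in> m_span r"
proof -
  obtain \<alpha> \<beta> \<gamma> where d: "E = varX ^ 3 * \<alpha> + varX * varY ^ 2 * \<beta> + varY ^ (r + 4) * \<gamma>"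
    "ord_ge (r + 4 - 3) \<alpha>" "ord_ge (r + 4 - 3) \<beta>"
    using ord_ge_decompose[OF _ E] by (metis le_add2)
  have "varX ^ 3 * \<alpha> \<in> m_span r" using r d(2) by (simp add: varX_cube_mult_in_m_span)
  moreover have "varX * varY ^ 2 * \<beta> \<in> m_span r" using d(3) by (intro varX_varY2_mult_in_m_span) (auto elim: ord_ge_mono)
  moreover have "varY ^ (r + 4) * \<gamma> \<in> m_span r"
    using m_span_mult[OF varY_power_in_m_span[of r "r + 4"], of \<gamma>] by (simp add: mult.commute)
  ultimately show ?thesis unfolding d(1) by (intro m_span_add)
qed

lemma contact_equiv_normal_form_perturbation:
  fixes E1 E2 :: "'a::field ps2"
  assumes r: "4 \<le> r" and E1: "ord_ge (r + 4) E1" and E2: "ord_ge (r + 4) E2"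
  shows "contact_equiv (varX ^ 3 + varY ^ r + E1, varX * varY ^ 2 + E2) (varX ^ 3 + varY ^ r, varX * varY ^ 2)"
proof -
  define t1 t2 where "t1 = (varX ^ 3 + varY ^ r :: 'a ps2)" and "t2 = (varX * varY ^ 2 :: 'a ps2)"
  obtain a1 b1 where k1: "E1 = a1 * t1 + b1 * t2" "ord_ge 1 a1" "ord_ge 1 b1"
    using ord_ge_in_m_span[OF r E1] unfolding m_span_def t1_def t2_def by blast
  obtain a2 b2 where k2: "E2 = a2 * t1 + b2 * t2" "ord_ge 1 a2" "ord_ge 1 b2"
    using ord_ge_in_m_span[OF r E2] unfolding m_span_def t1_def t2_def by blast
  define \<delta> where "\<delta> = (1 + a1) * (1 + b2) - b1 * a2"
  have "coeff2 \<delta> 0 0 = 1" using k1 k2 by (simp add: \<delta>_def coeff2_mult_0_0 coeff2_one ord_ge_def)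
  then obtain e where e: "\<delta> * e = 1" using ps2_dvd_one[of \<delta>] by (metis dvd_def one_neq_zero)
  have "((1 + b2) * e) * ((1 + a1) * e) - (- b1 * e) * (- a2 * e) = (\<delta> * e) * e"
    by (simp add: \<delta>_def algebra_simps)
  hence "is_GL2 ((1 + b2) * e) (- b1 * e) (- a2 * e) ((1 + a1) * e)"
    unfolding is_GL2_iff_det_dvd_one using e by (metis dvdI mult.commute mult_1_left)
  moreover have "contact_act ((1 + b2) * e, - b1 * e, - a2 * e, (1 + a1) * e) (varX, varY) (t1 + E1, t2 + E2) = (t1, t2)"
  proof -
    have "(1 + b2) * e * (t1 + E1) + - b1 * e * (t2 + E2) = (\<delta> * e) * t1"
      and "- a2 * e * (t1 + E1) + (1 + a1) * e * (t2 + E2) = (\<delta> * e) * t2"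
      unfolding k1(1) k2(1) \<delta>_def by (simp_all add: algebra_simps)
    thus ?thesis using e by (simp add: subst2_varX_varY)
  qed
  ultimately show ?thesis unfolding t1_def t2_def using contact_equivI is_aut_varX_varY by metis
qed

section \<open>Normalising the unit in front of \<open>y\<^sup>r\<close>\<close>

definition x_free :: "'a::comm_ring_1 ps2 \<Rightarrow> bool" where
  "x_free w \<longleftrightarrow> (\<forall>i j. 0 < i \<longrightarrow> coeff2 w i j = 0)"

lemma x_free_mult:
  assumes "x_free a" "x_free b"
  shows "x_free (a * b)"
  unfolding x_free_def coeff2_mult
proof (intro allI impI)
  fix i j :: nat assume i: "0 < i"
  have "coeff2 a i' j' * coeff2 b (i - i') (j - j') = 0" if "i' \<le> i" for i' j'
    using assms i that unfolding x_free_def by (cases "i' = 0") auto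
  thus "(\<Sum>j'\<le>j. \<Sum>i'\<le>i. coeff2 a i' j' * coeff2 b (i - i') (j - j')) = 0"
    by (intro sum.neutral ballI) auto
qed

lemma x_free_add: "x_free a \<Longrightarrow> x_free b \<Longrightarrow> x_free (a + b)"
  and x_free_const2: "x_free (const2 c)"
  and x_free_varY: "x_free varY"
  by (auto simp: x_free_def coeff2_const2 coeff2_varY)

lemma x_free_power: "x_free a \<Longrightarrow> x_free (a ^ n)"
  by (induction n) (auto simp: x_free_mult x_free_const2[of 1, simplified])

lemma subst2_x_free:
  assumes w: "x_free w" and p: "ord_ge 1 p"
  shows "subst2 w p varY = w"
proof (rule ord_ge_eqI)
  fix n
  have "subst2 (trunc2 n w) p varY = trunc2 n w"
    unfolding subst2_trunc2[OF p ord_ge_varY] unfolding trunc2_def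
  proof (rule sum.cong[OF refl])
    fix x assume "x \<in> triangle n"
    show "(case x of (i, j) \<Rightarrow> const2 (coeff2 w i j) * (p ^ i * varY ^ j)) =
        (case x of (i, j) \<Rightarrow> const2 (coeff2 w i j) * monom2 i j)"
      using w unfolding x_free_def by (cases x; cases "fst x = 0") (auto simp: monom2_def)
  qed
  hence "subst2 w p varY - w = (subst2 w p varY - subst2 (trunc2 n w) p varY) - (w - trunc2 n w)"
    by simp
  thus "ord_ge (Suc n) (subst2 w p varY - w)"
    using ord_ge_diff[OF ord_ge_subst2_minus_subst2_trunc2[of n w p varY] ord_ge_minus_trunc2[of n w]]
    by simp
qed

lemma alg_closed_cube_root:
  fixes a :: "'a::field"
  assumes "alg_closed_type TYPE('a)"
  obtains l where "l ^ 3 = a"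
proof -
  have "degree [:- a, 0, 0, 1:] \<ge> 1" by simp
  then obtain z where "poly [:- a, 0, 0, 1:] z = 0"
    using assms unfolding alg_closed_type_def by blast
  hence "z ^ 3 = a" by (simp add: algebra_simps power3_eq_cube)
  thus ?thesis by (rule that)
qed

text \<open>A cube root of \<open>w\<close> modulo \<open>y\<^sup>2\<close>: \<open>s = l (1 + \<mu> y)\<close> with \<open>l\<^sup>3 = w\<^sub>0\<close> and
  \<open>\<mu> = w\<^sub>1 / (3 w\<^sub>0)\<close>, which needs \<open>3 \<noteq> 0\<close>.\<close>

lemma x_free_cube_root_mod_varY2:
  fixes w :: "'a::field ps2"
  assumes alg: "alg_closed_type TYPE('a)" and three: "(3::'a) \<noteq> 0"
    and w: "x_free w" and w0: "coeff2 w 0 0 \<noteq> 0"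
  obtains s D where "x_free s" "coeff2 s 0 0 \<noteq> 0" "s ^ 3 = w + varY ^ 2 * D"
proof -
  define a0 a1 where "a0 = coeff2 w 0 0" and "a1 = coeff2 w 0 1"
  obtain l where l: "l ^ 3 = a0" using alg_closed_cube_root[OF alg] .
  define \<mu> where "\<mu> = a1 / (3 * a0)"
  define s where "s = const2 l + const2 (l * \<mu>) * varY"
  have s: "x_free s" unfolding s_def by (intro x_free_add x_free_mult x_free_const2 x_free_varY)
  have s00: "coeff2 s 0 0 = l" and s01: "coeff2 s 0 1 = l * \<mu>"
    by (simp_all add: s_def coeff2_const2 coeff2_varY)
  have c00: "coeff2 (s ^ 3) 0 0 = a0"
    using l by (simp add: power3_eq_cube coeff2_mult_0_0 s00)
  have "coeff2 (s ^ 3) 0 1 = 3 * l ^ 3 * \<mu>"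
    unfolding power3_eq_cube coeff2_mult_0_1 coeff2_mult_0_0 s00 s01 by (simp add: algebra_simps)
  hence c01: "coeff2 (s ^ 3) 0 1 = a1" using l three w0 by (simp add: \<mu>_def a0_def field_simps)
  define D where "D = ps2_of (\<lambda>a b. coeff2 (s ^ 3 - w) a (b + 2))"
  have s3: "x_free (s ^ 3)" using s by (rule x_free_power)
  have "s ^ 3 = w + varY ^ 2 * D"
  proof (rule ps2_eqI)
    fix i j
    have jj: "Suc (Suc (j - 2)) = j" if "\<not> j < 2" using that by simp
    show "coeff2 (s ^ 3) i j = coeff2 (w + varY ^ 2 * D) i j"
    proof (cases "j < 2")
      case True
      thus ?thesis
        using c00 c01 w s3 by (cases i; cases j) (auto simp: coeff2_varY_power_mult a0_def a1_def x_free_def)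
    next
      case False
      thus ?thesis by (simp add: coeff2_varY_power_mult D_def jj)
    qed
  qed
  moreover have "coeff2 s 0 0 \<noteq> 0" using l w0 s00 a0_def by auto
  ultimately show ?thesis using s that by blast
qed

lemma is_aut_varX_mult:
  fixes s :: "'a::field ps2"
  assumes s: "x_free s" and s0: "coeff2 s 0 0 \<noteq> 0"
  shows "is_aut (varX * s) varY"
proof -
  obtain s' where ss: "s * s' = 1" using ps2_dvd_one[OF s0] by (metis dvd_def)
  define p P where "p = varX * s" and "P = varX * s'"
  have lp: "ord_ge 1 p" and lP: "ord_ge 1 P"
    unfolding p_def P_def using ord_ge_mult[OF ord_ge_varX, of 0] by simp_all
  have sp: "subst2 s p varY = s" and sP: "subst2 s P varY = s"
    using subst2_x_free[OF s lp] subst2_x_free[OF s lP] .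
  have "s * subst2 s' p varY = 1"
    using subst2_mult[OF lp ord_ge_varY, of s s'] ss subst2_one[OF lp ord_ge_varY] sp by simp
  hence "s' * (s * subst2 s' p varY) = s'" by simp
  hence s'p: "subst2 s' p varY = s'" using ss by (simp add: mult.assoc[symmetric] mult.commute[of s'])
  show ?thesis unfolding p_def[symmetric]
  proof (rule is_autI[OF lp ord_ge_varY lP ord_ge_varY])
    show "subst2 p P varY = varX"
      unfolding p_def subst2_mult[OF lP ord_ge_varY] subst2_varX[OF lP ord_ge_varY] sP
      using ss by (simp add: P_def mult.assoc mult.commute[of s'])
    show "subst2 P p varY = varX"
      unfolding P_def subst2_mult[OF lp ord_ge_varY] subst2_varX[OF lp ord_ge_varY] s'p
      using ss by (simp add: p_def mult.assoc)
  qed (simp_all add: subst2_varY[OF lP ord_ge_varY] subst2_varY[OF lp ord_ge_varY])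
qed

text \<open>After \<open>x \<mapsto> x s\<close> the first component is \<open>x\<^sup>3 (w + y\<^sup>2 D) + y\<^sup>r w\<close>: dividing it by \<open>w\<close>
  and subtracting \<open>x\<^sup>2 D / (w s)\<close> times the second component \<open>x s y\<^sup>2\<close> gives \<open>x\<^sup>3 + y\<^sup>r\<close>.\<close>

lemma contact_equiv_normal_form:
  fixes g :: "'a::field ps2 \<times> 'a ps2"
  assumes alg: "alg_closed_type TYPE('a)" and three: "(3::'a) \<noteq> 0" and r: "4 \<le> r"
    and w: "x_free w" and w0: "coeff2 w 0 0 \<noteq> 0"
    and g1: "ord_ge (r + 4) (fst g - varX ^ 3 - varY ^ r * w)"
    and g2: "ord_ge (r + 4) (snd g - varX * varY ^ 2)"
  shows "contact_equiv g (varX ^ 3 + varY ^ r, varX * varY ^ 2)"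
proof -
  obtain s D where s: "x_free s" "coeff2 s 0 0 \<noteq> 0" and sD: "s ^ 3 = w + varY ^ 2 * D"
    using x_free_cube_root_mod_varY2[OF alg three w w0] .
  obtain v where vw: "w * v = 1" using ps2_dvd_one[OF w0] by (metis dvd_def)
  obtain s' where ss: "s * s' = 1" using ps2_dvd_one[OF s(2)] by (metis dvd_def)
  define p where "p = varX * s"
  have lp: "ord_ge 1 p" unfolding p_def using ord_ge_mult[OF ord_ge_varX, of 0] by simp
  define E1 E2 where "E1 = subst2 (fst g - varX ^ 3 - varY ^ r * w) p varY"
    and "E2 = subst2 (snd g - varX * varY ^ 2) p varY"
  have E: "ord_ge (r + 4) E1" "ord_ge (r + 4) E2"
    using g1 g2 unfolding E1_def E2_def by (simp_all add: ord_ge_subst2)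
  have "subst2 (fst g) p varY = p ^ 3 + varY ^ r * w + E1"
    using subst2_x_free[OF w lp]
    by (simp add: E1_def subst2_add subst2_diff subst2_mult[OF lp ord_ge_varY]
        subst2_power[OF lp ord_ge_varY] subst2_varX[OF lp ord_ge_varY] subst2_varY[OF lp ord_ge_varY])
  hence sg1: "subst2 (fst g) p varY = varX ^ 3 * s ^ 3 + varY ^ r * w + E1"
    by (simp add: p_def power_mult_distrib)
  have "subst2 (snd g) p varY = p * varY ^ 2 + E2"
    by (simp add: E2_def subst2_add subst2_diff subst2_mult[OF lp ord_ge_varY]
        subst2_power[OF lp ord_ge_varY] subst2_varX[OF lp ord_ge_varY] subst2_varY[OF lp ord_ge_varY])
  hence sg2: "subst2 (snd g) p varY = varX * s * varY ^ 2 + E2" by (simp add: p_def)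
  define u12 where "u12 = - (v * varX ^ 2 * D * s')"
  have "(v * s' - u12 * 0) * (w * s) = 1" using vw ss by (simp add: algebra_simps)
  hence GL: "is_GL2 v u12 0 s'" unfolding is_GL2_iff_det_dvd_one by (metis dvdI)
  define G where "G = contact_act (v, u12, 0, s') (p, varY) g"
  have "fst G = varX ^ 3 * (w * v) + varY ^ r * (w * v) + v * varX ^ 3 * varY ^ 2 * D * (1 - s * s')
      + (v * E1 - v * varX ^ 2 * D * s' * E2)"
    unfolding G_def contact_act_eq fst_conv sg1 sg2 sD u12_def
    by (simp add: algebra_simps power2_eq_square power3_eq_cube)
  hence G1: "fst G = varX ^ 3 + varY ^ r + (v * E1 - v * varX ^ 2 * D * s' * E2)"
    using vw ss by simp
  have "snd G = varX * varY ^ 2 * (s * s') + s' * E2"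
    unfolding G_def contact_act_eq snd_conv sg2 by (simp add: algebra_simps)
  hence G2: "snd G = varX * varY ^ 2 + s' * E2" using ss by simp
  have "contact_equiv G (varX ^ 3 + varY ^ r, varX * varY ^ 2)"
    using contact_equiv_normal_form_perturbation[OF r, of "v * E1 - v * varX ^ 2 * D * s' * E2" "s' * E2"] E
    by (simp add: G1[symmetric] G2[symmetric] ord_ge_diff ord_ge_mult_left)
  moreover have "contact_equiv g G"
    unfolding G_def p_def using GL is_aut_varX_mult[OF s] by (rule contact_equivI)
  ultimately show ?thesis using contact_equiv_trans by blast
qed

section \<open>The classification\<close>

lemma three_neq_zero_if_CHAR_gt_3:
  assumes "CHAR('a::semiring_1) > 3"
  shows "(3::'a) \<noteq> 0"
proof
  assume "(3::'a) = 0"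
  hence "of_nat 3 = (0::'a)" by simp
  hence "CHAR('a) dvd 3" by (simp only: of_nat_eq_0_iff_char_dvd)
  with assms show False by (auto dest: dvd_imp_le)
qed

lemma jet3_contact_equivE:
  assumes "jet3_contact_equiv f (t1, t2)"
  obtains h where "contact_equiv f h" "ord_ge 4 (fst h - t1)" "ord_ge 4 (snd h - t2)"
proof -
  obtain u11 u12 u21 u22 p q where U: "is_GL2 u11 u12 u21 u22" "is_aut p q"
    and j: "t1 - fst (contact_act (u11, u12, u21, u22) (p, q) f) \<in> ideal_pow maxid 4"
           "t2 - snd (contact_act (u11, u12, u21, u22) (p, q) f) \<in> ideal_pow maxid 4"
    using assms unfolding jet3_contact_equiv_def Let_def fst_conv snd_conv by blast
  from j have "ord_ge 4 (fst (contact_act (u11, u12, u21, u22) (p, q) f) - t1)"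
    "ord_ge 4 (snd (contact_act (u11, u12, u21, u22) (p, q) f) - t2)"
    by (metis ord_ge_ideal_pow_maxid ord_ge_uminus minus_diff_eq)+
  with contact_equivI[OF U] show ?thesis by (rule that)
qed

lemma ord_ge_y_poly_if_vanishing:
  "(\<And>j. 4 \<le> j \<Longrightarrow> j < M \<Longrightarrow> c j = 0) \<Longrightarrow> ord_ge M (y_poly c N)"
  by (auto simp: ord_ge_def coeff2_y_poly)

lemma y_poly_eq_varY_power_mult:
  assumes r: "4 \<le> r" "r < N" "c r \<noteq> 0" and below: "\<And>j. 4 \<le> j \<Longrightarrow> j < r \<Longrightarrow> c j = 0"
  obtains w where "x_free w" "coeff2 w 0 0 \<noteq> 0" "y_poly c N = varY ^ r * w"
proof
  define w where "w = ps2_of (\<lambda>a b. if a = 0 then coeff2 (y_poly c N) 0 (b + r) else 0)"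
  show "x_free w" by (simp add: x_free_def w_def)
  show "coeff2 w 0 0 \<noteq> 0" using r by (simp add: w_def coeff2_y_poly)
  show "y_poly c N = varY ^ r * w"
    by (rule ps2_eqI) (auto simp: coeff2_varY_power_mult w_def coeff2_y_poly below)
qed

text \<open>If \<open>c\<close> vanished below \<open>k + 2\<close>, then \<open>y\<^sup>k\<close> could not lie in the ideal of \<open>g\<close>.\<close>

lemma varY_power_in_crit_ideal_leading_term:
  fixes g :: "'a::comm_ring_1 ps2 \<times> 'a ps2"
  assumes Y: "varY ^ k \<in> crit_ideal g"
    and g1: "ord_ge (k + 6) (fst g - varX ^ 3 - y_poly c (k + 6))"
    and g2: "ord_ge (k + 6) (snd g - varX * varY ^ 2)"
  obtains r w where "4 \<le> r" "x_free w" "coeff2 w 0 0 \<noteq> 0"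
    "ord_ge (r + 4) (fst g - varX ^ 3 - varY ^ r * w)" "ord_ge (r + 4) (snd g - varX * varY ^ 2)"
proof -
  have "\<exists>r. 4 \<le> r \<and> r < k + 2 \<and> c r \<noteq> 0"
  proof (rule ccontr)
    assume "\<not> ?thesis"
    hence "ord_ge (k + 2) (y_poly c (k + 6))" by (intro ord_ge_y_poly_if_vanishing) auto
    moreover have "ord_ge (k + 2) (fst g - varX ^ 3 - y_poly c (k + 6))" using g1 by (rule ord_ge_mono) simp
    ultimately have "ord_ge (k + 2) (fst g - varX ^ 3)" using ord_ge_add by fastforce
    moreover have "ord_ge (k + 2) (snd g - varX * varY ^ 2)" using g2 by (rule ord_ge_mono) simp
    ultimately show False using varY_power_notin_crit_ideal Y by blast
  qed
  then obtain r where r: "4 \<le> r" "r < k + 2" "c r \<noteq> 0"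
    and least: "\<And>j. j < r \<Longrightarrow> \<not> (4 \<le> j \<and> j < k + 2 \<and> c j \<noteq> 0)"
    unfolding exists_least_iff[of "\<lambda>r. 4 \<le> r \<and> r < k + 2 \<and> c r \<noteq> 0"] by blast
  have below: "\<And>j. 4 \<le> j \<Longrightarrow> j < r \<Longrightarrow> c j = 0" using least r(2) by force
  have "r < k + 6" using r(2) by simp
  then obtain w where w: "x_free w" "coeff2 w 0 0 \<noteq> 0" "y_poly c (k + 6) = varY ^ r * w"
    using y_poly_eq_varY_power_mult[where c = c, OF r(1) _ r(3) below] by blast
  have "ord_ge (r + 4) (fst g - varX ^ 3 - varY ^ r * w)" "ord_ge (r + 4) (snd g - varX * varY ^ 2)"
    by (rule ord_ge_mono[OF g1[unfolded w(3)]], use r in simp, rule ord_ge_mono[OF g2], use r in simp)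
  with r(1) w(1,2) show ?thesis by (rule that)
qed

theorem proposition5p5:
  fixes f :: "'a::field ps2 \<times> 'a ps2"
  assumes "alg_closed_type TYPE('a)"
    and "CHAR('a) > 3"
    and "is_ICIS f"
    and "jet3_contact_equiv f (varX ^ 3, varX * varY ^ 2)"
  shows "\<exists>r\<ge>4. contact_equiv f (varX ^ 3 + varY ^ r, varX * varY ^ 2)"
proof -
  obtain h where fh: "contact_equiv f h"
    and h: "ord_ge 4 (fst h - varX ^ 3)" "ord_ge 4 (snd h - varX * varY ^ 2)"
    using assms(4) by (rule jet3_contact_equivE)
  obtain k where k: "\<And>g. contact_equiv f g \<Longrightarrow> varY ^ k \<in> crit_ideal g"
    using is_ICIS_varY_power_in_crit_ideal[OF assms(3)] by blast
  obtain g c where g: "contact_equiv f g" "ord_ge (k + 6) (fst g - varX ^ 3 - y_poly c (k + 6))"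
    "ord_ge (k + 6) (snd g - varX * varY ^ 2)"
    using contact_equiv_y_poly[OF fh h, of "k + 6"] by auto
  obtain r w where r: "4 \<le> r" and w: "x_free w" "coeff2 w 0 0 \<noteq> 0"
    and gw: "ord_ge (r + 4) (fst g - varX ^ 3 - varY ^ r * w)" "ord_ge (r + 4) (snd g - varX * varY ^ 2)"
    using varY_power_in_crit_ideal_leading_term[OF k[OF g(1)] g(2,3)] .
  have "contact_equiv g (varX ^ 3 + varY ^ r, varX * varY ^ 2)"
    using contact_equiv_normal_form[OF assms(1) three_neq_zero_if_CHAR_gt_3[OF assms(2)] r w gw] .
  thus ?thesis using g(1) r contact_equiv_trans by blast
qed

end
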